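(* Let $m,k\in\mathbb{N}$ (so $m,k\ge 1$) and let $l\ge 0$ be an integer with $\gcd(k,l)=1$. On the torus $\mathbb{T}^2=\mathbb{R}^2/(2\pi\mathbb{Z})^2$ consider the family of vector fields $$Y_\epsilon:\quad \dot x=\sin\big(m(ly-kx)\big),\qquad \dot y=\epsilon,$$ with $\epsilon\ge 0$. For $i=1,\dots,m$ let $C_-^i=\{(x,y)\in\mathbb{T}^2:\ ly-kx\equiv 2\pi(i-1)/m \pmod{2\pi}\}$ and $C_+^i=\{(x,y)\in\mathbb{T}^2:\ ly-kx\equiv (2\pi(i-1)+\pi)/m \pmod{2\pi}\}$. These are $2m$ disjoint simple closed curves of singularities of $Y_0$, each wrapping $k$ times vertically and $l$ times horizontally around $\mathbb{T}^2$; the $C_-^i$ consist of normally attracting singularities and the $C_+^i$ of normally repelling singularities of $Y_0$. Then there exist $\epsilon_0>0$ and tubular neighborhoods $\mathcal{U}_\pm^i$ of $C_\pm^i$ in $\mathbb{T}^2$ ($i=1,\dots,m$), independent of $\epsilon$, such that for every $\epsilon\in\,]0,\epsilon_0]$ the vector field $Y_\epsilon$ has exactly one limit cycle $\mathcal{O}_\pm^i$ in $\mathcal{U}_\pm^i$. Each $\mathcal{O}_-^i$ is a hyperbolically attracting non-canard limit cycle and each $\mathcal{O}_+^i$ is a hyperbolically repelling canard limit cycle; each $\mathcal{O}_\pm^i$ is a $(k,l)$-torus knot (it winds $k$ times vertically and $l$ times horizontally around $\mathbb{T}^2$), and $\mathcal{O}_\pm^i\to C_\pm^i$ in the Hausdorff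 sense as $\epsilon\to 0$. Moreover, for fixed $\epsilon\in\,]0,\epsilon_0]$ and any $\tau\in\mathbb{T}^2$ not lying on any of the cycles $\mathcal{O}_\pm^i$, the $\alpha$-limit set $\alpha(\tau)$ is one of the repelling cycles $\mathcal{O}_+^1,\dots,\mathcal{O}_+^m$ and the $\omega$-limit set $\omega(\tau)$ is one of the attracting cycles $\mathcal{O}_-^1,\dots,\mathcal{O}_-^m$.
   Context: Points of $\mathbb{T}^2$ are written $(x,y)$ with $x,y\in[0,2\pi[$ and opposite sides identified; "vertically" refers to the $y$-direction and "horizontally" to the $x$-direction: a closed curve winds $k$ times vertically and $l$ times horizontally if it crosses the horizontal circle $[0,2\pi[\times\{0\}$ exactly $k$ times and the vertical circle $\{0\}\times[0,2\pi[$ exactly $l$ times (in the same homotopy class as the curves $C^i_\pm$); such a simple closed curve is called a $(k,l)$-torus knot. A limit cycle of $Y_\epsilon$ is called a canard limit cycle if it contains a part passing near normally repelling portions of the critical curve (the set of singularities of $Y_0$), and non-canard otherwise. A limit cycle is hyperbolic if the derivative of its Poincaré return map differs from $1$ in absolute value. *)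

theory Defs
  imports "HOL-Analysis.Analysis"
begin

text \<open>The torus T^2 = R^2/(2 pi Z)^2.  A subset of the torus is represented by its
  (lattice-periodic) lift in R^2 = real \<times> real; a point of the torus by any representative.
  Distances of points to periodic sets in R^2 coincide with the flat torus distances.\<close>

definition lattice :: "(real \<times> real) set" where
  "lattice = {(2 * pi * of_int i, 2 * pi * of_int j) | i j :: int. True}"

definition teq :: "real \<times> real \<Rightarrow> real \<times> real \<Rightarrow> bool" where
  "teq p q \<longleftrightarrow> p - q \<in> lattice"

definition tdist :: "real \<times> real \<Rightarrow> real \<times> real \<Rightarrow> real" where
  "tdist p q = infdist p {q + w | w. w \<in> lattice}"

definition Yfield :: "nat \<Rightarrow> nat \<Rightarrow> nat \<Rightarrow> real \<Rightarrow> real \<times> real \<Rightarrow> real \<times> real" where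
  "Yfield m k l \<epsilon> = (\<lambda>(x, y). (sin (real m * (real l * y - real k * x)), \<epsilon>))"

definition Cminus :: "nat \<Rightarrow> nat \<Rightarrow> nat \<Rightarrow> nat \<Rightarrow> (real \<times> real) set" where
  "Cminus m k l i = {(x, y). \<exists>n::int.
      real l * y - real k * x = 2 * pi * (real i - 1) / real m + 2 * pi * of_int n}"

definition Cplus :: "nat \<Rightarrow> nat \<Rightarrow> nat \<Rightarrow> nat \<Rightarrow> (real \<times> real) set" where
  "Cplus m k l i = {(x, y). \<exists>n::int.
      real l * y - real k * x = (2 * pi * (real i - 1) + pi) / real m + 2 * pi * of_int n}"

definition is_sol :: "(real \<times> real \<Rightarrow> real \<times> real) \<Rightarrow> (real \<Rightarrow> real \<times> real) \<Rightarrow> bool" where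
  "is_sol F \<gamma> \<longleftrightarrow> (\<forall>t. (\<gamma> has_vector_derivative F (\<gamma> t)) (at t))"

definition torus_image :: "(real \<Rightarrow> real \<times> real) \<Rightarrow> real set \<Rightarrow> (real \<times> real) set" where
  "torus_image \<gamma> I = {p. \<exists>t\<in>I. teq p (\<gamma> t)}"

definition periodic_orbit :: "(real \<times> real \<Rightarrow> real \<times> real) \<Rightarrow> (real \<times> real) set \<Rightarrow> bool" where
  "periodic_orbit F Orb \<longleftrightarrow> (\<exists>\<gamma> T. is_sol F \<gamma> \<and> T > 0 \<and> teq (\<gamma> T) (\<gamma> 0) \<and>
       F (\<gamma> 0) \<noteq> 0 \<and> Orb = torus_image \<gamma> UNIV)"

definition limit_cycle :: "(real \<times> real \<Rightarrow> real \<times> real) \<Rightarrow> (real \<times> real) set \<Rightarrow> bool" where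
  "limit_cycle F Orb \<longleftrightarrow> periodic_orbit F Orb \<and>
     (\<exists>e>0. \<forall>Orb'. periodic_orbit F Orb' \<and> Orb' \<noteq> Orb \<longrightarrow> (\<exists>p\<in>Orb'. infdist p Orb \<ge> e))"

text \<open>mu is the derivative of the Poincare return map of the periodic orbit Orb, computed on a
  transversal segment {p0 + s v} through a point p0 of Orb: a point p0 + s v returns (after a time
  tau s depending continuously on s, tau 0 = T the period) to p0 + g s v on the torus.\<close>

definition poincare_multiplier ::
  "(real \<times> real \<Rightarrow> real \<times> real) \<Rightarrow> (real \<times> real) set \<Rightarrow> real \<Rightarrow> bool" where
  "poincare_multiplier F Orb \<mu> \<longleftrightarrow>
     (\<exists>\<gamma> T v \<delta> \<tau> g. is_sol F \<gamma> \<and> T > 0 \<and> teq (\<gamma> T) (\<gamma> 0) \<and> F (\<gamma> 0) \<noteq> 0 \<and>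
        Orb = torus_image \<gamma> UNIV \<and>
        fst (F (\<gamma> 0)) * snd v - snd (F (\<gamma> 0)) * fst v \<noteq> 0 \<and>
        \<delta> > 0 \<and> continuous_on {-\<delta><..<\<delta>} \<tau> \<and> \<tau> 0 = T \<and> g 0 = 0 \<and>
        (\<forall>s\<in>{-\<delta><..<\<delta>}. \<exists>\<psi>. is_sol F \<psi> \<and> \<psi> 0 = \<gamma> 0 + s *\<^sub>R v \<and>
              teq (\<psi> (\<tau> s)) (\<gamma> 0 + g s *\<^sub>R v)) \<and>
        (g has_real_derivative \<mu>) (at 0))"

definition hyperbolic_attracting :: "(real \<times> real \<Rightarrow> real \<times> real) \<Rightarrow> (real \<times> real) set \<Rightarrow> bool" where
  "hyperbolic_attracting F Orb \<longleftrightarrow> limit_cycle F Orb \<and> (\<exists>\<mu>. poincare_multiplier F Orb \<mu> \<and> \<bar>\<mu>\<bar> < 1)"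

definition hyperbolic_repelling :: "(real \<times> real \<Rightarrow> real \<times> real) \<Rightarrow> (real \<times> real) set \<Rightarrow> bool" where
  "hyperbolic_repelling F Orb \<longleftrightarrow> limit_cycle F Orb \<and> (\<exists>\<mu>. poincare_multiplier F Orb \<mu> \<and> \<bar>\<mu>\<bar> > 1)"

definition normally_repelling :: "(real \<times> real \<Rightarrow> real \<times> real) \<Rightarrow> real \<times> real \<Rightarrow> bool" where
  "normally_repelling F p \<longleftrightarrow> F p = 0 \<and> (\<exists>D. (F has_derivative D) (at p) \<and>
      (\<exists>v. v \<noteq> 0 \<and> D v = 0) \<and> (\<exists>w c. w \<noteq> 0 \<and> c > 0 \<and> D w = c *\<^sub>R w))"

text \<open>A family of limit cycles Orb eps (eps \<rightarrow> 0+) of Y_eps is canard if it passes (in the limit)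
  near a portion of the normally repelling part of the critical curve of Y_0 = F0: there is a
  nonempty piece (ball \<inter> repelling set) of that part which is uniformly approached by Orb eps.\<close>

definition canard_family ::
  "(real \<times> real \<Rightarrow> real \<times> real) \<Rightarrow> (real \<Rightarrow> (real \<times> real) set) \<Rightarrow> bool" where
  "canard_family F0 Orb \<longleftrightarrow> (\<exists>a r. r > 0 \<and> normally_repelling F0 a \<and>
      (\<forall>e>0. eventually (\<lambda>\<epsilon>. \<forall>b. b \<in> ball a r \<and> normally_repelling F0 b \<longrightarrow>
                                     infdist b (Orb \<epsilon>) < e) (at_right 0)))"

definition torus_knot :: "nat \<Rightarrow> nat \<Rightarrow> (real \<times> real) set \<Rightarrow> bool" where
  "torus_knot k l Orb \<longleftrightarrow> (\<exists>\<gamma> T. T > 0 \<and> continuous_on UNIV \<gamma> \<and>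
      \<gamma> T = \<gamma> 0 + (2 * pi * real l, 2 * pi * real k) \<and>
      (\<forall>s\<in>{0..<T}. \<forall>t\<in>{0..<T}. teq (\<gamma> s) (\<gamma> t) \<longrightarrow> s = t) \<and>
      Orb = torus_image \<gamma> {0..T})"

definition hausdorff_tendsto :: "(real \<Rightarrow> (real \<times> real) set) \<Rightarrow> (real \<times> real) set \<Rightarrow> bool" where
  "hausdorff_tendsto Orb C \<longleftrightarrow> (\<forall>e>0. eventually (\<lambda>\<epsilon>.
       (\<forall>p\<in>Orb \<epsilon>. infdist p C < e) \<and> (\<forall>q\<in>C. infdist q (Orb \<epsilon>) < e)) (at_right 0))"

definition omega_limit :: "(real \<times> real \<Rightarrow> real \<times> real) \<Rightarrow> real \<times> real \<Rightarrow> (real \<times> real) set" where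
  "omega_limit F p = {q. \<exists>\<gamma> tn. is_sol F \<gamma> \<and> \<gamma> 0 = p \<and> filterlim tn at_top sequentially \<and>
       (\<lambda>n. tdist (\<gamma> (tn n)) q) \<longlonglongrightarrow> 0}"

definition alpha_limit :: "(real \<times> real \<Rightarrow> real \<times> real) \<Rightarrow> real \<times> real \<Rightarrow> (real \<times> real) set" where
  "alpha_limit F p = {q. \<exists>\<gamma> tn. is_sol F \<gamma> \<and> \<gamma> 0 = p \<and> filterlim tn at_bot sequentially \<and>
       (\<lambda>n. tdist (\<gamma> (tn n)) q) \<longlonglongrightarrow> 0}"

end

(*
  Along a trajectory of Y_\<epsilon> the height y grows at constant speed \<epsilon>, while m times the phase
  l y - k x obeys Adler's equation \<theta>' = A - B sin \<theta> with A = m l \<epsilon> and B = m k. For small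
  \<epsilon> > 0 its equilibria \<theta> = \<alpha> and \<theta> = \<pi> - \<alpha> (mod 2\<pi>), where \<alpha> = arcsin (l \<epsilon> / k),
  are the straight (k, l) curves O_-^i and O_+^i, shifted by \<alpha>/m in phase from the critical
  curves C_-^i and C_+^i. Off the equilibria, tan ((\<theta> + \<alpha>)/2) satisfies a linear equation, so every
  trajectory is explicit: its phase tends to \<alpha> forwards and to \<pi> - \<alpha> backwards, which gives
  the uniqueness of the cycles and the limit sets, and the Poincare multipliers are
  exp (- 2\<pi> k \<omega> / \<epsilon>) and exp (2\<pi> k \<omega> / \<epsilon>) with \<omega> = sqrt (B^2 - A^2). Canard behaviour
  is read off directly: the normally repelling part of the critical set of Y_0 is exactly the
  union of the C_+^i.
*)

theory Submission
  imports Defs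
begin

section \<open>Uniqueness for Lipschitz scalar equations and trigonometric facts\<close>

lemma lipschitz_ode_unique_forward:
  fixes f g h :: "real \<Rightarrow> real"
  assumes h: "L-lipschitz_on UNIV h"
    and f: "\<And>t. (f has_real_derivative h (f t)) (at t)"
    and g: "\<And>t. (g has_real_derivative h (g t)) (at t)"
    and "f 0 = g 0" and "0 \<le> t"
  shows "f t = g t"
proof -
  \<comment> \<open>Gronwall's argument: the weighted squared difference \<open>E\<close> is non-increasing.\<close>
  define E where "E t = (f t - g t)\<^sup>2 * exp (- 2 * L * t)" for t
  have "E t \<le> E 0"
  proof (rule DERIV_nonpos_imp_nonincreasing[OF \<open>0 \<le> t\<close>])
    fix x
    let ?d = "f x - g x"
    have "(E has_real_derivative
        2 * (?d * (h (f x) - h (g x)) - L * ?d\<^sup>2) * exp (- 2 * L * x)) (at x)"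
      unfolding E_def by (auto intro!: derivative_eq_intros f g simp: algebra_simps power2_eq_square)
    moreover have "?d * (h (f x) - h (g x)) \<le> L * ?d\<^sup>2"
    proof -
      have "?d * (h (f x) - h (g x)) \<le> \<bar>?d\<bar> * \<bar>h (f x) - h (g x)\<bar>"
        by (metis abs_ge_self abs_mult)
      also have "\<dots> \<le> \<bar>?d\<bar> * (L * \<bar>?d\<bar>)"
        using lipschitz_onD[OF h, of "f x" "g x"] by (intro mult_left_mono) (auto simp: dist_real_def)
      also have "\<dots> = L * ?d\<^sup>2" by (simp add: power2_eq_square abs_mult_self_eq mult.left_commute)
      finally show ?thesis .
    qed
    ultimately show "\<exists>y. DERIV E x :> y \<and> y \<le> 0"
      by (intro exI conjI) (auto intro: mult_nonpos_nonneg)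
  qed
  moreover have "E 0 = 0" using \<open>f 0 = g 0\<close> by (simp add: E_def)
  ultimately have "(f t - g t)\<^sup>2 \<le> 0" by (simp add: E_def mult_le_0_iff)
  then show ?thesis by simp
qed

text \<open>Backward uniqueness follows by reversing time, which replaces h by -h.\<close>

lemma lipschitz_ode_unique:
  fixes f g h :: "real \<Rightarrow> real"
  assumes h: "L-lipschitz_on UNIV h"
    and f: "\<And>t. (f has_real_derivative h (f t)) (at t)"
    and g: "\<And>t. (g has_real_derivative h (g t)) (at t)"
    and "f 0 = g 0"
  shows "f t = g t"
proof (cases "0 \<le> t")
  case True
  with lipschitz_ode_unique_forward[OF assms] show ?thesis .
next
  case False
  have "L-lipschitz_on UNIV (\<lambda>x. - h x)" using h by simp
  moreover have "((\<lambda>s. f (- s)) has_real_derivative - h (f (- s))) (at s)"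
    and "((\<lambda>s. g (- s)) has_real_derivative - h (g (- s))) (at s)" for s
    using f[of "- s"] g[of "- s"] by (simp_all add: DERIV_mirror)
  ultimately have "f (- (- t)) = g (- (- t))"
    by (rule lipschitz_ode_unique_forward[where f = "\<lambda>s. f (- s)" and g = "\<lambda>s. g (- s)"])
      (use \<open>f 0 = g 0\<close> False in auto)
  then show ?thesis by simp
qed

lemma sin_lipschitz: "1-lipschitz_on UNIV (sin :: real \<Rightarrow> real)"
proof (rule lipschitz_onI)
  fix x y :: real
  have "\<bar>sin x - sin y\<bar> = 2 * \<bar>sin ((x - y) / 2)\<bar> * \<bar>cos ((x + y) / 2)\<bar>"
    by (simp only: sin_diff_sin abs_mult abs_numeral)
  also have "\<dots> \<le> 2 * \<bar>(x - y) / 2\<bar> * 1"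
    by (intro mult_mono abs_sin_x_le_abs_x) auto
  finally show "dist (sin x) (sin y) \<le> 1 * dist x y" by (simp add: dist_real_def)
qed simp

lemma abs_cos_diff_le: "\<bar>cos x - cos y\<bar> \<le> \<bar>x - y :: real\<bar>"
  using lipschitz_onD[OF sin_lipschitz, of "x + pi/2" "y + pi/2"] by (simp add: sin_add dist_real_def)

lemma sin_2arctan: "sin (2 * arctan w) = 2 * w / (1 + w\<^sup>2)"
proof -
  have "sin (2 * arctan w) = 2 * w / (sqrt (1 + w\<^sup>2) * sqrt (1 + w\<^sup>2))"
    by (simp add: sin_double sin_arctan cos_arctan)
  also have "\<dots> = 2 * w / (1 + w\<^sup>2)" by (simp add: add_nonneg_nonneg)
  finally show ?thesis .
qed

lemma cos_2arctan: "cos (2 * arctan w) = (1 - w\<^sup>2) / (1 + w\<^sup>2)"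
  by (simp add: cos_double sin_arctan cos_arctan power_divide diff_divide_distrib)

lemma exp_neg_mult_tendsto_0:
  fixes c :: real
  assumes "c > 0" shows "((\<lambda>t. exp (- c * t)) \<longlongrightarrow> 0) at_top"
proof -
  have "LIM t at_top. (- c) * t :> at_bot"
    by (rule filterlim_tendsto_neg_mult_at_bot[OF tendsto_const _ filterlim_ident]) (use assms in simp)
  then show ?thesis by (rule filterlim_compose[OF exp_at_bot])
qed

lemma sin_plus_2pi_int: "sin (x + 2 * pi * of_int n) = sin (x :: real)"
  by (simp add: sin_add)

lemma cos_plus_2pi_int: "cos (x + 2 * pi * of_int n) = cos (x :: real)"
  by (simp add: cos_add)

lemma one_le_abs_of_int_nonzero: "(z::int) \<noteq> 0 \<Longrightarrow> 1 \<le> \<bar>real_of_int z\<bar>"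
  by linarith

lemma scaled_abs_add_ge:
  fixes c d x y D :: real
  assumes "0 < c" "c * D = x + y" "\<bar>x\<bar> \<le> d" "2 * d \<le> \<bar>y\<bar>"
  shows "d / c \<le> \<bar>D\<bar>"
proof -
  have "d \<le> \<bar>c * D\<bar>" using assms(2-4) by linarith
  then show ?thesis using assms(1) by (simp add: abs_mult field_simps)
qed

lemma filterlim_arith_progression:
  fixes C c :: real
  assumes "C > 0"
  shows "filterlim (\<lambda>n. c + C * of_int (int n)) at_top sequentially"
    and "filterlim (\<lambda>n. c + C * of_int (- int n)) at_bot sequentially"
proof -
  have *: "filterlim (\<lambda>n. c + C * real n) at_top sequentially" for c
    by (intro filterlim_tendsto_add_at_top[OF tendsto_const]
        filterlim_tendsto_pos_mult_at_top[OF tendsto_const _ filterlim_real_sequentially])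
      (use assms in auto)
  then show "filterlim (\<lambda>n. c + C * of_int (int n)) at_top sequentially" by simp
  show "filterlim (\<lambda>n. c + C * of_int (- int n)) at_bot sequentially"
    using *[of "- c"] by (simp add: filterlim_uminus_at_bot)
qed

lemma eq_arctan_mod_2pi:
  fixes x c :: real
  assumes "\<And>n::int. x \<noteq> c + pi + 2 * pi * of_int n"
  obtains n :: int and w where "x = c + 2 * pi * of_int n + 2 * arctan w"
proof -
  define n where "n = \<lfloor>(x - c + pi) / (2 * pi)\<rfloor>"
  have "2 * pi * of_int n \<le> x - c + pi" "x - c + pi < 2 * pi * of_int n + 2 * pi"
    using floor_divide_lower[of "2 * pi" "x - c + pi"] floor_divide_upper[of "2 * pi" "x - c + pi"]
    by (simp_all add: n_def algebra_simps)
  moreover have "x - c - 2 * pi * of_int n \<noteq> - pi"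
    using assms[of "n - 1"] by (auto simp: algebra_simps)
  ultimately have "arctan (tan ((x - c - 2 * pi * of_int n) / 2)) = (x - c - 2 * pi * of_int n) / 2"
    by (intro arctan_tan) auto
  then have "x = c + 2 * pi * of_int n + 2 * arctan (tan ((x - c - 2 * pi * of_int n) / 2))"
    by simp
  then show ?thesis by (rule that)
qed

section \<open>Adler's equation \<open>\<theta>' = A - B sin \<theta>\<close> in the phase-locked regime \<open>0 \<le> A < B\<close>\<close>

definition adler_solves :: "real \<Rightarrow> real \<Rightarrow> (real \<Rightarrow> real) \<Rightarrow> bool" where
  "adler_solves A B f \<longleftrightarrow> (\<forall>t. (f has_real_derivative A - B * sin (f t)) (at t))"

locale adler =
  fixes A B :: real
  assumes adler_params: "0 \<le> A" "A < B"
begin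

definition rate :: real where "rate = sqrt (B\<^sup>2 - A\<^sup>2)"

definition angle :: real where "angle = arcsin (A / B)"

definition equilibrium :: "real \<Rightarrow> bool" where
  "equilibrium c \<longleftrightarrow> (\<exists>n::int. c = angle + 2 * pi * of_int n \<or> c = pi - angle + 2 * pi * of_int n)"

lemma B_pos: "B > 0"
  using adler_params by simp

lemma A_div_B_bounds: "0 \<le> A / B" "A / B < 1"
  using adler_params B_pos by auto

lemma rate_pos: "rate > 0"
  unfolding rate_def using adler_params by (simp add: power_strict_mono)

lemma sin_angle: "B * sin angle = A"
  unfolding angle_def using A_div_B_bounds B_pos by simp

lemma cos_angle: "B * cos angle = rate"
proof -
  have "cos angle = sqrt (1 - (A / B)\<^sup>2)"
    unfolding angle_def using A_div_B_bounds by (simp add: cos_arcsin)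
  also have "1 - (A / B)\<^sup>2 = (B\<^sup>2 - A\<^sup>2) / B\<^sup>2"
    using B_pos by (simp add: field_simps)
  finally show ?thesis
    unfolding rate_def using B_pos by (simp add: real_sqrt_divide)
qed

lemma angle_bounds: "0 \<le> angle" "angle < pi / 2"
proof -
  show "0 \<le> angle" using A_div_B_bounds arcsin_le_arcsin[of 0 "A / B"] by (simp add: angle_def)
  have "angle \<noteq> pi / 2"
  proof
    assume "angle = pi / 2"
    then have "sin angle = 1" by (simp only: sin_pi_half)
    then show False using sin_angle adler_params by simp
  qed
  then show "angle < pi / 2"
    using arcsin_bounded[of "A / B"] A_div_B_bounds by (simp add: angle_def)
qed

lemma cos_angle_pos: "cos angle > 0"
  using cos_angle rate_pos B_pos by (metis zero_less_mult_pos)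

lemma rate_tan_angle: "rate * tan angle = A"
proof -
  have "rate * tan angle = B * sin angle"
    using cos_angle_pos by (simp add: tan_def flip: cos_angle)
  then show ?thesis by (simp add: sin_angle)
qed

lemma inverse_cos_angle_squared: "inverse ((cos angle)\<^sup>2) = 1 + (tan angle)\<^sup>2"
  using cos_angle_pos by (simp add: tan_def power_divide field_simps)

lemma equilibrium_solves: "equilibrium c \<Longrightarrow> adler_solves A B (\<lambda>t. c)"
  unfolding equilibrium_def adler_solves_def using sin_angle
  by (auto simp: sin_plus_2pi_int)

lemma solves_unique:
  assumes "adler_solves A B f" "adler_solves A B g" "f 0 = g 0"
  shows "f t = g t"
proof (rule lipschitz_ode_unique[where f = f and g = g and h = "\<lambda>x. A - B * sin x"])
  show "B-lipschitz_on UNIV (\<lambda>x. A - B * sin x)"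
  proof (rule lipschitz_onI)
    fix x y
    have "dist (A - B * sin x) (A - B * sin y) = B * dist (sin x) (sin y)"
      using B_pos by (simp add: dist_real_def abs_mult right_diff_distrib[symmetric] abs_minus_commute)
    also have "\<dots> \<le> B * dist x y"
      using lipschitz_onD[OF sin_lipschitz] B_pos by (simp add: mult_left_mono)
    finally show "dist (A - B * sin x) (A - B * sin y) \<le> B * dist x y" .
  qed (use B_pos in simp)
qed (use assms in \<open>auto simp: adler_solves_def\<close>)

text \<open>Reversing time and reflecting \<open>\<theta> \<mapsto> \<pi> - \<theta>\<close> is a symmetry of the equation that swaps
  the stable and the unstable equilibria.\<close>

lemma solves_reflect:
  assumes "adler_solves A B f" shows "adler_solves A B (\<lambda>t. pi - f (- t))"
  unfolding adler_solves_def
proof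
  fix t
  have "((\<lambda>t. f (- t)) has_real_derivative - (A - B * sin (f (- t)))) (at t)"
    using assms DERIV_mirror unfolding adler_solves_def by blast
  then have "((\<lambda>t. pi - f (- t)) has_real_derivative A - B * sin (f (- t))) (at t)"
    by (auto intro!: derivative_eq_intros)
  then show "((\<lambda>t. pi - f (- t)) has_real_derivative A - B * sin (pi - f (- t))) (at t)"
    by simp
qed

text \<open>The explicit solutions away from the unstable equilibria: in the variable
  \<open>w = tan ((\<theta> + angle) / 2)\<close> the equation becomes linear, \<open>w' = - rate (w - tan angle)\<close>.\<close>

definition sol :: "int \<Rightarrow> real \<Rightarrow> real \<Rightarrow> real" where
  "sol n w t = - angle + 2 * pi * of_int n + 2 * arctan (tan angle + (w - tan angle) * exp (- rate * t))"

lemma sol_0: "sol n w 0 = - angle + 2 * pi * of_int n + 2 * arctan w"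
  by (simp add: sol_def)

lemma sol_tan_angle: "sol n (tan angle) t = angle + 2 * pi * of_int n"
  using angle_bounds by (simp add: sol_def arctan_tan)

lemma arctan_tan_angle_add:
  "\<bar>x\<bar> < pi / 2 - angle \<Longrightarrow> arctan (tan (angle + x)) = angle + x"
  using angle_bounds by (intro arctan_tan) auto

lemma sol_solves: "adler_solves A B (sol n w)"
  unfolding adler_solves_def
proof
  fix t
  define W where "W = tan angle + (w - tan angle) * exp (- rate * t)"
  have W: "1 + W\<^sup>2 > 0" by (simp add: add_pos_nonneg)
  have "sol n w t = (2 * arctan W - angle) + 2 * pi * of_int n"
    by (simp add: sol_def W_def)
  then have "B * sin (sol n w t) = B * sin (2 * arctan W - angle)"
    by (simp only: sin_plus_2pi_int)
  also have "\<dots> = B * ((2 * W / (1 + W\<^sup>2)) * cos angle - ((1 - W\<^sup>2) / (1 + W\<^sup>2)) * sin angle)"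
    by (simp only: sin_diff sin_2arctan cos_2arctan)
  also have "\<dots> = (2 * W * (B * cos angle) - (1 - W\<^sup>2) * (B * sin angle)) / (1 + W\<^sup>2)"
    by (simp add: add_divide_distrib diff_divide_distrib algebra_simps)
  finally have "B * sin (sol n w t) = \<dots>" .
  then have "A - B * sin (sol n w t) = 2 * ((w - tan angle) * (exp (- rate * t) * (- rate))) / (1 + W\<^sup>2)"
    using W rate_tan_angle[symmetric] by (simp add: cos_angle sin_angle W_def field_simps power2_eq_square)
  moreover have "(sol n w has_real_derivative
      2 * ((w - tan angle) * (exp (- rate * t) * (- rate))) / (1 + W\<^sup>2)) (at t)"
    unfolding sol_def[abs_def] W_def
    by (auto intro!: derivative_eq_intros simp: power2_eq_square divide_simps)
  ultimately show "(sol n w has_real_derivative A - B * sin (sol n w t)) (at t)" by simp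
qed

lemma sol_tendsto: "(sol n w \<longlongrightarrow> angle + 2 * pi * of_int n) at_top"
proof -
  have "(sol n w \<longlongrightarrow> - angle + 2 * pi * of_int n + 2 * arctan (tan angle + (w - tan angle) * 0)) at_top"
    unfolding sol_def[abs_def] by (intro tendsto_intros exp_neg_mult_tendsto_0 rate_pos)
  then show ?thesis using angle_bounds by (simp add: arctan_tan)
qed

lemma sol_deriv_initial:
  "((\<lambda>s. sol n (tan (angle - c * s)) T) has_real_derivative - 2 * c * exp (- rate * T)) (at 0)"
proof -
  have "cos angle \<noteq> 0" using cos_angle rate_pos by auto
  then have "((\<lambda>s. sol n (tan (angle - c * s)) T) has_real_derivative
      2 * (inverse ((cos angle)\<^sup>2) * (- c) * exp (- rate * T)) / (1 + (tan angle)\<^sup>2)) (at 0)"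
    unfolding sol_def
    by (auto intro!: derivative_eq_intros DERIV_tan[THEN DERIV_chain2] simp: power2_eq_square divide_simps)
  moreover have "1 + (tan angle)\<^sup>2 \<noteq> 0"
    by (metis add_pos_nonneg zero_le_power2 zero_less_one less_irrefl)
  ultimately show ?thesis by (simp add: inverse_cos_angle_squared mult.assoc)
qed

lemma equilibrium_reflect: "equilibrium (pi - c) \<longleftrightarrow> equilibrium c"
proof -
  have *: "equilibrium (pi - c)" if "equilibrium c" for c
  proof -
    from that obtain n :: int where "c = angle + 2 * pi * of_int n \<or> c = pi - angle + 2 * pi * of_int n"
      unfolding equilibrium_def by blast
    then have "pi - c = pi - angle + 2 * pi * of_int (- n) \<or> pi - c = angle + 2 * pi * of_int (- n)"
      by auto
    then show ?thesis unfolding equilibrium_def by blast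
  qed
  show ?thesis using *[of c] *[of "pi - c"] by auto
qed

lemma solves_eq_sol:
  assumes "adler_solves A B f" and "\<And>n::int. f 0 \<noteq> pi - angle + 2 * pi * of_int n"
  obtains n w where "f = sol n w"
proof -
  have "\<And>n::int. f 0 \<noteq> - angle + pi + 2 * pi * of_int n"
    using assms(2) by (simp add: algebra_simps)
  then obtain n w where "f 0 = - angle + 2 * pi * of_int n + 2 * arctan w"
    by (rule eq_arctan_mod_2pi)
  then have "f = sol n w"
    using solves_unique[OF assms(1) sol_solves] by (auto simp: sol_0)
  then show ?thesis by (rule that)
qed

lemma solves_exists: "\<exists>f. adler_solves A B f \<and> f 0 = x"
proof (cases "\<exists>n::int. x = pi - angle + 2 * pi * of_int n")
  case True
  then have "equilibrium x" unfolding equilibrium_def by blast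
  then show ?thesis using equilibrium_solves by blast
next
  case False
  then have "\<And>n::int. x \<noteq> - angle + pi + 2 * pi * of_int n"
    by (simp add: algebra_simps)
  then obtain n w where "x = - angle + 2 * pi * of_int n + 2 * arctan w"
    by (rule eq_arctan_mod_2pi)
  then show ?thesis using sol_solves sol_0 by metis
qed

lemma periodic_sol_equilibrium:
  assumes "adler_solves A B f" and "T > 0" and "f T - f 0 = 2 * pi * of_int z"
  shows "equilibrium (f 0)"
proof (rule ccontr)
  assume ne: "\<not> equilibrium (f 0)"
  then have "\<And>n::int. f 0 \<noteq> pi - angle + 2 * pi * of_int n"
    unfolding equilibrium_def by blast
  then obtain n w where f: "f = sol n w"
    by (rule solves_eq_sol[OF assms(1)])
  have "w \<noteq> tan angle"
    using ne sol_tan_angle[of n 0] unfolding f equilibrium_def by auto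
  moreover have "exp (- rate * T) \<noteq> 1"
    using rate_pos assms(2) by simp
  ultimately have "(w - tan angle) * exp (- rate * T) \<noteq> w - tan angle"
    by (metis mult.right_neutral mult_left_cancel right_minus_eq)
  then have "tan angle + (w - tan angle) * exp (- rate * T) \<noteq> w"
    by linarith
  then have "arctan (tan angle + (w - tan angle) * exp (- rate * T)) \<noteq> arctan w"
    by (metis tan_arctan)
  then have "f T \<noteq> f 0"
    unfolding f sol_def by simp
  moreover have "\<bar>f T - f 0\<bar> < 2 * pi"
  proof -
    let ?W = "tan angle + (w - tan angle) * exp (- rate * T)"
    have "f T - f 0 = 2 * arctan ?W - 2 * arctan w"
      unfolding f sol_def by simp
    then show ?thesis
      using arctan_lbound[of w] arctan_ubound[of w] arctan_lbound[of ?W] arctan_ubound[of ?W]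
      by linarith
  qed
  ultimately show False
    using assms(3) by (cases "z = 0") (auto simp: abs_mult dest!: one_le_abs_of_int_nonzero)
qed

lemma solves_tendsto_at_top:
  assumes "adler_solves A B f" and "\<not> equilibrium (f 0)"
  obtains n :: int where "(f \<longlongrightarrow> angle + 2 * pi * of_int n) at_top"
  using solves_eq_sol[OF assms(1)] assms(2) sol_tendsto unfolding equilibrium_def by metis

lemma solves_tendsto_at_bot:
  assumes "adler_solves A B f" and "\<not> equilibrium (f 0)"
  obtains n :: int where "(f \<longlongrightarrow> pi - angle + 2 * pi * of_int n) at_bot"
proof -
  have "adler_solves A B (\<lambda>t. pi - f (- t))" and "\<not> equilibrium (pi - f (- 0))"
    using solves_reflect[OF assms(1)] assms(2) equilibrium_reflect by simp_all
  then obtain n :: int where "((\<lambda>t. pi - f (- t)) \<longlongrightarrow> angle + 2 * pi * of_int n) at_top"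
    by (rule solves_tendsto_at_top)
  then have "((\<lambda>t. f (- t)) \<longlongrightarrow> pi - (angle + 2 * pi * of_int n)) at_top"
    by (auto dest: tendsto_diff[OF tendsto_const, of _ _ _ pi])
  then have "(f \<longlongrightarrow> pi - angle + 2 * pi * of_int (- n)) at_bot"
    by (simp add: filterlim_at_bot_mirror algebra_simps)
  then show ?thesis by (rule that)
qed

end


section \<open>The phase of the flow on the torus\<close>

lemma lattice_mem: "(2 * pi * of_int i, 2 * pi * of_int j) \<in> lattice"
  unfolding lattice_def by blast

lemma lattice_add: "w \<in> lattice \<Longrightarrow> w' \<in> lattice \<Longrightarrow> w + w' \<in> lattice"
  unfolding lattice_def by clarsimp (metis distrib_left of_int_add)

lemma lattice_uminus: "w \<in> lattice \<Longrightarrow> - w \<in> lattice"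
  unfolding lattice_def by clarsimp (metis mult_minus_right of_int_minus)

lemma lattice_diff: "w \<in> lattice \<Longrightarrow> w' \<in> lattice \<Longrightarrow> w - w' \<in> lattice"
  using lattice_add[OF _ lattice_uminus] by (simp add: diff_conv_add_uminus del: add_uminus_conv_diff)

lemma zero_in_lattice: "0 \<in> lattice"
  using lattice_mem[of 0 0] by (simp add: zero_prod_def)

lemma lattice_mem_nat_mult: "(2 * pi * real a * of_int N, 2 * pi * real b * of_int N) \<in> lattice"
  using lattice_mem[of "int a * N" "int b * N"] by (simp add: mult.assoc)

lemma tdist_nonneg: "0 \<le> tdist p q"
  unfolding tdist_def by (rule infdist_nonneg)

lemma has_vector_derivative_fst:
  "(\<gamma> has_vector_derivative v) F \<Longrightarrow> ((\<lambda>t. fst (\<gamma> t)) has_real_derivative fst v) F"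
  unfolding has_field_derivative_def has_vector_derivative_def
  by (drule has_derivative_fst) (erule has_derivative_eq_rhs; simp add: fun_eq_iff)

lemma has_vector_derivative_snd:
  "(\<gamma> has_vector_derivative v) F \<Longrightarrow> ((\<lambda>t. snd (\<gamma> t)) has_real_derivative snd v) F"
  unfolding has_field_derivative_def has_vector_derivative_def
  by (drule has_derivative_snd) (erule has_derivative_eq_rhs; simp add: fun_eq_iff)

text \<open>\<open>Y\<^sub>\<epsilon>\<close> depends on a point only through its phase \<open>l y - k x\<close>, whose level sets modulo
  \<open>2\<pi>\<close> are the straight \<open>(k, l)\<close> curves on the torus.\<close>

locale torus_flow =
  fixes m k l :: nat
  assumes m_pos: "m \<ge> 1" and k_pos: "k \<ge> 1" and coprime_kl: "coprime k l"
begin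

definition phase :: "real \<times> real \<Rightarrow> real" where
  "phase p = real l * snd p - real k * fst p"

definition phase_curve :: "real \<Rightarrow> (real \<times> real) set" where
  "phase_curve c = {p. \<exists>n::int. phase p = c + 2 * pi * of_int n}"

definition base_point :: "real \<Rightarrow> real \<times> real" where
  "base_point c = (- c / real k, 0)"

lemma phase_add: "phase (p + q) = phase p + phase q"
  by (simp add: phase_def algebra_simps)

lemma phase_diff: "phase (p - q) = phase p - phase q"
  by (simp add: phase_def algebra_simps)

lemma phase_base_point: "phase (base_point c) = c"
  using k_pos by (simp add: phase_def base_point_def)

lemma base_point_in_phase_curve: "base_point c \<in> phase_curve c"
  using phase_base_point[of c] unfolding phase_curve_def by (intro CollectI exI[of _ 0]) simp

lemma in_phase_curve_phase: "p \<in> phase_curve (phase p)"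
  unfolding phase_curve_def by (intro CollectI exI[of _ 0]) simp

lemma phase_lattice:
  assumes "w \<in> lattice" obtains z :: int where "phase w = 2 * pi * of_int z"
proof -
  from assms obtain i j :: int where "w = (2 * pi * of_int i, 2 * pi * of_int j)"
    unfolding lattice_def by auto
  then have "phase w = 2 * pi * of_int (int l * j - int k * i)"
    by (simp add: phase_def algebra_simps)
  then show ?thesis by (rule that)
qed

text \<open>Coprimality of \<open>k\<close> and \<open>l\<close> makes every phase shift in \<open>2\<pi>\<int>\<close> a lattice translation, so
  each level set of the phase is a single closed curve on the torus.\<close>

lemma bezout_kl: obtains u v :: int where "u * int k + v * int l = 1"
  using bezout_int[of "int k" "int l"] coprime_kl by (auto simp: coprime_iff_gcd_eq_1)

lemma lattice_with_phase: "\<exists>w\<in>lattice. phase w = 2 * pi * of_int z"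
proof -
  obtain u v :: int where uv: "u * int k + v * int l = 1"
    by (rule bezout_kl)
  have "phase (2 * pi * of_int (- u * z), 2 * pi * of_int (v * z)) =
      2 * pi * of_int ((u * int k + v * int l) * z)"
    by (simp add: phase_def algebra_simps)
  then show ?thesis using uv lattice_mem by (metis mult_1)
qed

lemma phase_curve_shift: "phase_curve (c + 2 * pi * of_int q) = phase_curve c"
proof -
  have "(\<exists>n::int. x = c + 2 * pi * of_int q + 2 * pi * of_int n) \<longleftrightarrow>
      (\<exists>n::int. x = c + 2 * pi * of_int n)" for x
    by (metis (no_types, opaque_lifting) add.assoc add_diff_cancel_left' diff_add_cancel
        distrib_left of_int_add of_int_diff)
  then show ?thesis unfolding phase_curve_def by blast
qed

lemma phase_curve_iff_cos: "p \<in> phase_curve c \<longleftrightarrow> cos (phase p - c) = 1"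
  unfolding phase_curve_def cos_one_2pi_int by (auto simp: algebra_simps)

lemma phase_curve_lattice:
  assumes "p \<in> phase_curve c" and "w \<in> lattice"
  shows "p + w \<in> phase_curve c"
proof -
  obtain n z :: int where "phase p = c + 2 * pi * of_int n" and "phase w = 2 * pi * of_int z"
    using assms phase_lattice unfolding phase_curve_def by blast
  then have "phase (p + w) = c + 2 * pi * of_int (n + z)"
    by (simp add: phase_add algebra_simps)
  then show ?thesis unfolding phase_curve_def by blast
qed

lemma teq_phase_curve: "teq p q \<Longrightarrow> q \<in> phase_curve c \<Longrightarrow> p \<in> phase_curve c"
  unfolding teq_def using phase_curve_lattice[of q c "p - q"] by simp

lemma phase_curve_translate:
  assumes "p \<in> phase_curve c" obtains w where "w \<in> lattice" and "phase (p + w) = c"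
proof -
  obtain n :: int where n: "phase p = c + 2 * pi * of_int n"
    using assms unfolding phase_curve_def by blast
  obtain w where "w \<in> lattice" "phase w = 2 * pi * of_int (- n)"
    using lattice_with_phase by blast
  with n show ?thesis using that by (simp add: phase_add)
qed

lemma phase_curve_index:
  "\<exists>j\<in>{1..m}. phase_curve ((x + 2 * pi * of_int n) / real m) =
      phase_curve ((x + 2 * pi * (real j - 1)) / real m)"
proof (intro bexI)
  have "of_int n = real m * of_int (n div int m) + of_int (n mod int m)"
    by (metis mult_div_mod_eq of_int_add of_int_mult of_int_of_nat_eq)
  then have "(x + 2 * pi * of_int n) / real m =
      (x + 2 * pi * of_int (n mod int m)) / real m + 2 * pi * of_int (n div int m)"
    using m_pos by (simp add: field_simps)
  moreover have "real (nat (n mod int m) + 1) - 1 = of_int (n mod int m)"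
    using m_pos by simp
  ultimately show "phase_curve ((x + 2 * pi * of_int n) / real m) =
      phase_curve ((x + 2 * pi * (real (nat (n mod int m) + 1) - 1)) / real m)"
    by (simp add: phase_curve_shift)
  have "0 \<le> n mod int m" "n mod int m < int m"
    using m_pos by auto
  then show "nat (n mod int m) + 1 \<in> {1..m}"
    by auto
qed

lemma phase_lipschitz: "\<bar>phase p - phase q\<bar> \<le> (real k + real l) * dist p q"
proof -
  have "\<bar>phase p - phase q\<bar> = \<bar>real l * (snd p - snd q) - real k * (fst p - fst q)\<bar>"
    by (simp add: phase_def algebra_simps)
  also have "\<dots> \<le> real l * \<bar>snd p - snd q\<bar> + real k * \<bar>fst p - fst q\<bar>"
    using abs_triangle_ineq4[of "real l * (snd p - snd q)" "real k * (fst p - fst q)"]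
    by (simp add: abs_mult)
  also have "\<dots> \<le> real l * dist p q + real k * dist p q"
    using dist_fst_le[of p q] dist_snd_le[of p q]
    by (intro add_mono mult_left_mono) (auto simp: dist_real_def)
  finally show ?thesis by (simp add: algebra_simps)
qed

lemma infdist_phase_curve_le:
  assumes "p \<in> phase_curve v" shows "infdist p (phase_curve c) \<le> \<bar>v - c\<bar>"
proof -
  obtain n :: int where n: "phase p = v + 2 * pi * of_int n"
    using assms unfolding phase_curve_def by blast
  define N where "N = real k ^ 2 + real l ^ 2"
  have N: "N \<ge> 1" unfolding N_def using k_pos by (simp add: add_increasing2 one_le_power)
  define s where "s = (c - v) / N"
  define q where "q = p + s *\<^sub>R (- real k, real l)"
  have "phase (s *\<^sub>R (- real k, real l)) = s * N"
    unfolding N_def by (simp add: phase_def power2_eq_square algebra_simps)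
  also have "\<dots> = c - v"
    using N by (simp add: s_def)
  finally have "phase q = c + 2 * pi * of_int n"
    using n by (simp add: q_def phase_add)
  then have "q \<in> phase_curve c" unfolding phase_curve_def by blast
  moreover have "dist p q \<le> \<bar>v - c\<bar>"
  proof -
    have "dist p q = \<bar>s\<bar> * sqrt N"
      by (simp add: q_def dist_norm norm_Pair N_def power_mult_distrib real_sqrt_mult
          flip: distrib_left)
    also have "\<dots> = \<bar>v - c\<bar> / sqrt N"
    proof -
      have "sqrt N * sqrt N = N" using N by simp
      then show ?thesis using N by (simp add: s_def abs_divide abs_minus_commute field_simps)
    qed
    also have "\<dots> \<le> \<bar>v - c\<bar>"
      using N by (simp add: divide_le_eq mult_le_cancel_left1)
    finally show ?thesis .
  qed
  ultimately show ?thesis by (rule infdist_le2)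
qed

lemma infdist_phase_curve_ge:
  assumes "\<And>n::int. d \<le> \<bar>phase p - c - 2 * pi * of_int n\<bar>"
  shows "d / (real k + real l) \<le> infdist p (phase_curve c)"
proof -
  have ne: "phase_curve c \<noteq> {}" using base_point_in_phase_curve by blast
  show ?thesis unfolding infdist_notempty[OF ne]
  proof (rule cINF_greatest[OF ne])
    fix q assume "q \<in> phase_curve c"
    then obtain n :: int where "phase q = c + 2 * pi * of_int n"
      unfolding phase_curve_def by blast
    then have "d \<le> \<bar>phase p - phase q\<bar>" using assms[of n] by (simp add: algebra_simps)
    also have "\<dots> \<le> (real k + real l) * dist p q" by (rule phase_lipschitz)
    finally show "d / (real k + real l) \<le> dist p q"
      using k_pos by (simp add: divide_le_eq mult.commute)
  qed
qed

lemma Yfield_phase: "Yfield m k l \<epsilon> p = (sin (real m * phase p), \<epsilon>)"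
  by (cases p) (simp add: Yfield_def phase_def)

abbreviation solves_phase_eq :: "real \<Rightarrow> (real \<Rightarrow> real) \<Rightarrow> bool" where
  "solves_phase_eq \<epsilon> \<equiv> adler_solves (real m * real l * \<epsilon>) (real m * real k)"

definition lag :: "real \<Rightarrow> real" where
  "lag \<epsilon> = arcsin (real l * \<epsilon> / real k)"

definition cycle_phase :: "real \<Rightarrow> real \<Rightarrow> bool" where
  "cycle_phase \<epsilon> v \<longleftrightarrow>
     (\<exists>n::int. real m * v = lag \<epsilon> + 2 * pi * of_int n \<or> real m * v = pi - lag \<epsilon> + 2 * pi * of_int n)"

lemma adler_phase_eq: "0 \<le> \<epsilon> \<Longrightarrow> real l * \<epsilon> < real k \<Longrightarrow> adler (real m * real l * \<epsilon>) (real m * real k)"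
  using m_pos by unfold_locales auto

lemma adler_angle_lag:
  "0 \<le> \<epsilon> \<Longrightarrow> real l * \<epsilon> < real k \<Longrightarrow> adler.angle (real m * real l * \<epsilon>) (real m * real k) = lag \<epsilon>"
  using m_pos by (simp add: adler.angle_def[OF adler_phase_eq] lag_def)

lemma cycle_phase_equilibrium:
  "0 \<le> \<epsilon> \<Longrightarrow> real l * \<epsilon> < real k \<Longrightarrow>
    cycle_phase \<epsilon> v \<longleftrightarrow> adler.equilibrium (real m * real l * \<epsilon>) (real m * real k) (real m * v)"
  by (simp add: cycle_phase_def adler.equilibrium_def[OF adler_phase_eq] adler_angle_lag)

definition lift_curve :: "real \<Rightarrow> real \<Rightarrow> (real \<Rightarrow> real) \<Rightarrow> real \<Rightarrow> real \<times> real" where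
  "lift_curve \<epsilon> y \<theta> t = ((real l * (y + \<epsilon> * t) - \<theta> t / real m) / real k, y + \<epsilon> * t)"

lemma phase_lift_curve: "phase (lift_curve \<epsilon> y \<theta> t) = \<theta> t / real m"
  using k_pos by (simp add: lift_curve_def phase_def)

lemma lift_curve_period:
  assumes "\<epsilon> \<noteq> 0"
  shows "lift_curve \<epsilon> y \<theta> (2 * pi * real k / \<epsilon>) =
    lift_curve \<epsilon> y (\<lambda>_. \<theta> (2 * pi * real k / \<epsilon>)) 0 + (2 * pi * real l, 2 * pi * real k)"
  using assms k_pos by (simp add: lift_curve_def field_simps)

lemma is_sol_lift_curve:
  assumes "solves_phase_eq \<epsilon> \<theta>"
  shows "is_sol (Yfield m k l \<epsilon>) (lift_curve \<epsilon> y \<theta>)"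
  unfolding is_sol_def
proof
  fix t
  have mk: "real m > 0" "real k > 0" using m_pos k_pos by auto
  have "((\<lambda>t. fst (lift_curve \<epsilon> y \<theta> t)) has_real_derivative
      (real l * \<epsilon> - (real m * real l * \<epsilon> - real m * real k * sin (\<theta> t)) / real m) / real k) (at t)"
    using assms mk unfolding lift_curve_def adler_solves_def by (auto intro!: derivative_eq_intros)
  moreover have "(real l * \<epsilon> - (real m * real l * \<epsilon> - real m * real k * sin (\<theta> t)) / real m) / real k =
      sin (real m * phase (lift_curve \<epsilon> y \<theta> t))"
    using mk by (simp add: phase_lift_curve field_simps)
  moreover have "((\<lambda>t. snd (lift_curve \<epsilon> y \<theta> t)) has_real_derivative \<epsilon>) (at t)"
    unfolding lift_curve_def by (auto intro!: derivative_eq_intros)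
  ultimately have "((\<lambda>t. (fst (lift_curve \<epsilon> y \<theta> t), snd (lift_curve \<epsilon> y \<theta> t))) has_vector_derivative
      (sin (real m * phase (lift_curve \<epsilon> y \<theta> t)), \<epsilon>)) (at t)"
    by (intro has_vector_derivative_Pair) (simp_all add: has_real_derivative_iff_has_vector_derivative)
  then show "(lift_curve \<epsilon> y \<theta> has_vector_derivative Yfield m k l \<epsilon> (lift_curve \<epsilon> y \<theta> t)) (at t)"
    by (simp add: Yfield_phase)
qed

lemma snd_sol:
  assumes "is_sol (Yfield m k l \<epsilon>) \<gamma>"
  shows "snd (\<gamma> t) = snd (\<gamma> 0) + \<epsilon> * t"
proof -
  have "((\<lambda>t. snd (\<gamma> t) - \<epsilon> * t) has_real_derivative 0) (at t)" for t
    using has_vector_derivative_snd[OF assms[unfolded is_sol_def, rule_format, of t]]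
    by (auto intro!: derivative_eq_intros simp: Yfield_phase)
  then have "snd (\<gamma> t) - \<epsilon> * t = snd (\<gamma> 0) - \<epsilon> * 0"
    using DERIV_isconst_all[of "\<lambda>t. snd (\<gamma> t) - \<epsilon> * t"] by blast
  then show ?thesis by simp
qed

lemma solves_phase_eq_sol:
  assumes "is_sol (Yfield m k l \<epsilon>) \<gamma>"
  shows "solves_phase_eq \<epsilon> (\<lambda>t. real m * phase (\<gamma> t))"
  unfolding adler_solves_def
proof
  fix t
  have v: "(\<gamma> has_vector_derivative (sin (real m * phase (\<gamma> t)), \<epsilon>)) (at t)"
    using assms[unfolded is_sol_def, rule_format, of t] by (simp add: Yfield_phase)
  have "((\<lambda>t. real m * (real l * snd (\<gamma> t) - real k * fst (\<gamma> t))) has_real_derivative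
      real m * (real l * \<epsilon> - real k * sin (real m * phase (\<gamma> t)))) (at t)"
    using has_vector_derivative_fst[OF v] has_vector_derivative_snd[OF v]
    by (auto intro!: derivative_eq_intros)
  then show "((\<lambda>t. real m * phase (\<gamma> t)) has_real_derivative
      real m * real l * \<epsilon> - real m * real k * sin (real m * phase (\<gamma> t))) (at t)"
    by (simp add: phase_def algebra_simps)
qed

lemma sol_eq_lift_curve:
  assumes "is_sol (Yfield m k l \<epsilon>) \<gamma>"
  shows "\<gamma> = lift_curve \<epsilon> (snd (\<gamma> 0)) (\<lambda>t. real m * phase (\<gamma> t))"
proof
  fix t
  have "fst (\<gamma> t) = (real l * snd (\<gamma> t) - phase (\<gamma> t)) / real k"
    using k_pos by (simp add: phase_def)
  then show "\<gamma> t = lift_curve \<epsilon> (snd (\<gamma> 0)) (\<lambda>t. real m * phase (\<gamma> t)) t"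
    using snd_sol[OF assms, of t] m_pos by (simp add: lift_curve_def prod_eq_iff)
qed

lemma torus_image_straight:
  assumes "e > 0"
  shows "torus_image (lift_curve e y (\<lambda>_. real m * v)) {0..2 * pi * real k / e} = phase_curve v"
    and "torus_image (lift_curve e y (\<lambda>_. real m * v)) UNIV = phase_curve v"
proof -
  let ?\<gamma> = "lift_curve e y (\<lambda>_. real m * v)"
  have "?\<gamma> t \<in> phase_curve v" for t
    using m_pos phase_lift_curve[of e y "\<lambda>_. real m * v" t] in_phase_curve_phase[of "?\<gamma> t"] by simp
  then have sub: "torus_image ?\<gamma> I \<subseteq> phase_curve v" for I
    unfolding torus_image_def using teq_phase_curve by blast
  have "p \<in> torus_image ?\<gamma> {0..2 * pi * real k / e}" if p: "p \<in> phase_curve v" for p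
  proof -
    obtain w where w: "w \<in> lattice" "phase (p + w) = v"
      using phase_curve_translate[OF p] by blast
    define N where "N = \<lfloor>(snd (p + w) - y) / (2 * pi * real k)\<rfloor>"
    define t where "t = (snd (p + w) - 2 * pi * real k * of_int N - y) / e"
    have "2 * pi * real k * of_int N \<le> snd (p + w) - y"
      and "snd (p + w) - y < 2 * pi * real k * of_int N + 2 * pi * real k"
      using floor_divide_lower[of "2 * pi * real k" "snd (p + w) - y"]
        floor_divide_upper[of "2 * pi * real k" "snd (p + w) - y"] k_pos
      by (simp_all add: N_def algebra_simps)
    then have t: "t \<in> {0..2 * pi * real k / e}"
      unfolding t_def using assms by (auto intro: divide_right_mono)
    have "y + e * t = snd (p + w) - 2 * pi * real k * of_int N"
      using assms by (simp add: t_def)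
    then have "?\<gamma> t = ((real l * (snd (p + w) - 2 * pi * real k * of_int N) - v) / real k,
        snd (p + w) - 2 * pi * real k * of_int N)"
      using m_pos by (simp add: lift_curve_def)
    also have "\<dots> = (p + w) - (2 * pi * real l * of_int N, 2 * pi * real k * of_int N)"
      using w(2) k_pos by (simp add: phase_def prod_eq_iff field_simps)
    finally have "p - ?\<gamma> t = (2 * pi * real l * of_int N, 2 * pi * real k * of_int N) - w"
      by (simp add: algebra_simps)
    then have "teq p (?\<gamma> t)"
      unfolding teq_def using lattice_diff[OF lattice_mem_nat_mult w(1)] by metis
    with t show ?thesis unfolding torus_image_def by blast
  qed
  then show "torus_image ?\<gamma> {0..2 * pi * real k / e} = phase_curve v"
    using sub by blast
  then show "torus_image ?\<gamma> UNIV = phase_curve v"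
    using sub unfolding torus_image_def by blast
qed

abbreviation straight_orbit :: "real \<Rightarrow> real \<Rightarrow> real \<Rightarrow> real \<times> real" where
  "straight_orbit \<epsilon> v \<equiv> lift_curve \<epsilon> 0 (\<lambda>_. real m * v)"

lemma straight_orbit_closed:
  assumes "0 < \<epsilon>" "real l * \<epsilon> < real k" "cycle_phase \<epsilon> v"
  shows "is_sol (Yfield m k l \<epsilon>) (straight_orbit \<epsilon> v)"
    and "teq (straight_orbit \<epsilon> v (2 * pi * real k / \<epsilon>)) (straight_orbit \<epsilon> v 0)"
    and "Yfield m k l \<epsilon> (straight_orbit \<epsilon> v 0) \<noteq> 0"
    and "torus_image (straight_orbit \<epsilon> v) UNIV = phase_curve v"
proof -
  interpret adler "real m * real l * \<epsilon>" "real m * real k"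
    using adler_phase_eq assms by simp
  show "is_sol (Yfield m k l \<epsilon>) (straight_orbit \<epsilon> v)"
    using assms by (intro is_sol_lift_curve equilibrium_solves) (simp add: cycle_phase_equilibrium)
  show "teq (straight_orbit \<epsilon> v (2 * pi * real k / \<epsilon>)) (straight_orbit \<epsilon> v 0)"
    using lift_curve_period[of \<epsilon> 0 "\<lambda>_. real m * v"] assms lattice_mem_nat_mult[of l 1 k]
    by (simp add: teq_def)
  show "Yfield m k l \<epsilon> (straight_orbit \<epsilon> v 0) \<noteq> 0"
    using assms by (simp add: Yfield_phase zero_prod_def)
  show "torus_image (straight_orbit \<epsilon> v) UNIV = phase_curve v"
    using torus_image_straight(2) assms by simp
qed

lemma periodic_orbit_phase_curve:
  assumes "0 < \<epsilon>" "real l * \<epsilon> < real k" "cycle_phase \<epsilon> v"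
  shows "periodic_orbit (Yfield m k l \<epsilon>) (phase_curve v)"
  unfolding periodic_orbit_def
  using straight_orbit_closed[OF assms] assms(1) k_pos by (intro exI[of _ "2 * pi * real k / \<epsilon>"] exI) auto

lemma periodic_orbit_is_phase_curve:
  assumes "0 < \<epsilon>" "real l * \<epsilon> < real k" "periodic_orbit (Yfield m k l \<epsilon>) Orb"
  obtains v where "cycle_phase \<epsilon> v" and "Orb = phase_curve v"
proof -
  interpret adler "real m * real l * \<epsilon>" "real m * real k"
    using adler_phase_eq assms by simp
  obtain \<gamma> T where \<gamma>: "is_sol (Yfield m k l \<epsilon>) \<gamma>" "T > 0" "teq (\<gamma> T) (\<gamma> 0)"
    and Orb: "Orb = torus_image \<gamma> UNIV"
    using assms(3) unfolding periodic_orbit_def by blast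
  define \<theta> where "\<theta> t = real m * phase (\<gamma> t)" for t
  have \<theta>: "solves_phase_eq \<epsilon> \<theta>"
    unfolding \<theta>_def using solves_phase_eq_sol[OF \<gamma>(1)] .
  obtain z :: int where "phase (\<gamma> T - \<gamma> 0) = 2 * pi * of_int z"
    using \<gamma>(3) phase_lattice unfolding teq_def by blast
  then have "\<theta> T - \<theta> 0 = 2 * pi * of_int (int m * z)"
    by (simp add: \<theta>_def phase_diff flip: right_diff_distrib)
  then have eq: "equilibrium (\<theta> 0)"
    by (rule periodic_sol_equilibrium[OF \<theta> \<gamma>(2)])
  define v where "v = \<theta> 0 / real m"
  have "\<theta> 0 = real m * v"
    using m_pos by (simp add: v_def)
  moreover have "\<theta> t = \<theta> 0" for t
    using solves_unique[OF \<theta> equilibrium_solves[OF eq], of t] by simp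
  ultimately have "\<theta> = (\<lambda>_. real m * v)"
    by (simp add: fun_eq_iff)
  moreover have "(\<lambda>t. real m * phase (\<gamma> t)) = \<theta>"
    by (simp add: \<theta>_def fun_eq_iff)
  ultimately have "\<gamma> = lift_curve \<epsilon> (snd (\<gamma> 0)) (\<lambda>_. real m * v)"
    using sol_eq_lift_curve[OF \<gamma>(1)] by simp
  then have "Orb = phase_curve v"
    using Orb torus_image_straight(2)[OF assms(1), of "snd (\<gamma> 0)" v] by metis
  moreover have "cycle_phase \<epsilon> v"
    using eq \<open>\<theta> 0 = real m * v\<close> assms by (simp add: cycle_phase_equilibrium)
  ultimately show ?thesis using that by blast
qed

lemma common_period_in_2pi_int:
  assumes "real l * x = 2 * pi * of_int i" "real k * x = 2 * pi * of_int j"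
  obtains z :: int where "x = 2 * pi * of_int z"
proof -
  obtain u w :: int where "u * int k + w * int l = 1"
    by (rule bezout_kl)
  then have "x = (of_int u * real k + of_int w * real l) * x"
    by (metis mult_1 of_int_1 of_int_add of_int_mult of_int_of_nat_eq)
  also have "\<dots> = of_int u * (real k * x) + of_int w * (real l * x)"
    by (simp add: algebra_simps)
  also have "\<dots> = 2 * pi * of_int (u * j + w * i)"
    unfolding assms by (simp add: algebra_simps)
  finally show ?thesis by (rule that)
qed

lemma torus_knot_phase_curve: "torus_knot k l (phase_curve v)"
  unfolding torus_knot_def
proof (intro exI conjI ballI impI)
  let ?\<gamma> = "lift_curve (real k) 0 (\<lambda>_. real m * v)"
  have k: "real k > 0" using k_pos by simp
  show "0 < 2 * pi" by simp
  show "continuous_on UNIV ?\<gamma>"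
    unfolding lift_curve_def using k by (intro continuous_intros) auto
  show "?\<gamma> (2 * pi) = ?\<gamma> 0 + (2 * pi * real l, 2 * pi * real k)"
    using k by (simp add: lift_curve_def field_simps)
  show "phase_curve v = torus_image ?\<gamma> {0..2 * pi}"
    using torus_image_straight(1)[OF k] k by simp
  fix s t assume st: "s \<in> {0..<2 * pi}" "t \<in> {0..<2 * pi}" and "teq (?\<gamma> s) (?\<gamma> t)"
  then obtain i j :: int where ij: "?\<gamma> s - ?\<gamma> t = (2 * pi * of_int i, 2 * pi * of_int j)"
    unfolding teq_def lattice_def by blast
  have "?\<gamma> s - ?\<gamma> t = (real l * (s - t), real k * (s - t))"
    using k by (simp add: lift_curve_def divide_simps algebra_simps)
  with ij have ij: "real l * (s - t) = 2 * pi * of_int i" "real k * (s - t) = 2 * pi * of_int j"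
    by simp_all
  then obtain z :: int where d: "s - t = 2 * pi * of_int z"
    by (rule common_period_in_2pi_int)
  moreover have "\<bar>s - t\<bar> < 2 * pi" using st by auto
  ultimately have "\<bar>real_of_int z\<bar> < 1"
    by (simp add: abs_mult)
  then have "z = 0" by linarith
  then show "s = t" using d by simp
qed

section \<open>The cycles and their separation\<close>

text \<open>The critical curves \<open>C\<^sub>-\<^sup>i\<close>, \<open>C\<^sub>+\<^sup>i\<close> are the phase curves of \<open>c_minus i\<close>, \<open>c_plus i\<close>; the cycles
  \<open>O\<^sub>-\<^sup>i\<close>, \<open>O\<^sub>+\<^sup>i\<close> are those of \<open>o_minus i \<epsilon>\<close>, \<open>o_plus i \<epsilon>\<close>, shifted by \<open>lag \<epsilon> / m\<close> in phase.\<close>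

definition c_minus :: "nat \<Rightarrow> real" where
  "c_minus i = 2 * pi * (real i - 1) / real m"

definition c_plus :: "nat \<Rightarrow> real" where
  "c_plus i = (2 * pi * (real i - 1) + pi) / real m"

definition o_minus :: "nat \<Rightarrow> real \<Rightarrow> real" where
  "o_minus i \<epsilon> = c_minus i + lag \<epsilon> / real m"

definition o_plus :: "nat \<Rightarrow> real \<Rightarrow> real" where
  "o_plus i \<epsilon> = c_plus i - lag \<epsilon> / real m"

lemma Cminus_eq: "Cminus m k l i = phase_curve (c_minus i)"
  unfolding Cminus_def phase_curve_def c_minus_def phase_def by (auto simp: algebra_simps)

lemma Cplus_eq: "Cplus m k l i = phase_curve (c_plus i)"
  unfolding Cplus_def phase_curve_def c_plus_def phase_def by (auto simp: algebra_simps)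

\<comment> \<open>The offsets \<open>0\<close> are displayed so that these equations instantiate the separation lemmas.\<close>
lemma m_c_minus: "real m * c_minus i = 0 + 2 * pi * of_int (int i - 1)"
  using m_pos by (simp add: c_minus_def)

lemma m_c_plus: "real m * c_plus i = 0 + pi + 2 * pi * of_int (int i - 1)"
  using m_pos by (simp add: c_plus_def field_simps)

lemma m_o_minus: "real m * o_minus i \<epsilon> = lag \<epsilon> + 2 * pi * of_int (int i - 1)"
  using m_pos by (simp add: o_minus_def c_minus_def field_simps)

lemma m_o_plus: "real m * o_plus i \<epsilon> = - lag \<epsilon> + pi + 2 * pi * of_int (int i - 1)"
  using m_pos by (simp add: o_plus_def c_plus_def field_simps)

lemma cycle_phase_cases:
  assumes "cycle_phase \<epsilon> v"
  obtains (stable) n :: int where "real m * v = lag \<epsilon> + 2 * pi * of_int n"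
    | (unstable) n :: int where "real m * v = - lag \<epsilon> + pi + 2 * pi * of_int n"
  using assms unfolding cycle_phase_def by (auto simp: algebra_simps)

lemma cycle_phase_o_minus: "cycle_phase \<epsilon> (o_minus i \<epsilon>)"
  unfolding cycle_phase_def m_o_minus by blast

lemma cycle_phase_o_plus: "cycle_phase \<epsilon> (o_plus i \<epsilon>)"
  unfolding cycle_phase_def m_o_plus by (intro exI[of _ "int i - 1"]) simp

lemma o_minus_index:
  "\<exists>j\<in>{1..m}. phase_curve ((lag \<epsilon> + 2 * pi * of_int n) / real m) = phase_curve (o_minus j \<epsilon>)"
proof -
  have "(lag \<epsilon> + 2 * pi * (real j - 1)) / real m = o_minus j \<epsilon>" for j
    using m_pos by (simp add: o_minus_def c_minus_def field_simps)
  then show ?thesis using phase_curve_index[of "lag \<epsilon>" n] by auto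
qed

lemma o_plus_index:
  "\<exists>j\<in>{1..m}. phase_curve ((pi - lag \<epsilon> + 2 * pi * of_int n) / real m) = phase_curve (o_plus j \<epsilon>)"
proof -
  have "(pi - lag \<epsilon> + 2 * pi * (real j - 1)) / real m = o_plus j \<epsilon>" for j
    using m_pos by (simp add: o_plus_def c_plus_def field_simps)
  then show ?thesis using phase_curve_index[of "pi - lag \<epsilon>" n] by auto
qed

lemma cycle_phase_index:
  assumes "cycle_phase \<epsilon> v"
  shows "\<exists>j\<in>{1..m}. phase_curve v = phase_curve (o_minus j \<epsilon>) \<or> phase_curve v = phase_curve (o_plus j \<epsilon>)"
  using assms
proof (cases rule: cycle_phase_cases)
  case (stable n)
  then have "v = (lag \<epsilon> + 2 * pi * of_int n) / real m"
    using m_pos by (simp add: field_simps)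
  then show ?thesis using o_minus_index[of \<epsilon> n] by blast
next
  case (unstable n)
  then have "v = (pi - lag \<epsilon> + 2 * pi * of_int n) / real m"
    using m_pos by (simp add: field_simps)
  then show ?thesis using o_plus_index[of \<epsilon> n] by blast
qed

text \<open>Scaled by \<open>m\<close>, the phases of the cycles lie within \<open>\<pi>/4\<close> of \<open>0\<close> (stable class) or of \<open>\<pi>\<close>
  (unstable class) modulo \<open>2\<pi>\<close>, and so do those of \<open>C\<^sub>-\<^sup>i\<close> and \<open>C\<^sub>+\<^sup>i\<close>. Phases of different classes,
  or of different curves of one class, are therefore at least \<open>\<pi>/(2m)\<close> apart.\<close>

definition phases_apart :: "real \<Rightarrow> real \<Rightarrow> bool" where
  "phases_apart v c \<longleftrightarrow> (\<forall>n::int. pi / (2 * real m) \<le> \<bar>v - c - 2 * pi * of_int n\<bar>)"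

lemma phases_apart_commute: "phases_apart v c \<longleftrightarrow> phases_apart c v"
proof -
  have "\<bar>v - c - 2 * pi * of_int n\<bar> = \<bar>c - v - 2 * pi * of_int (- n)\<bar>" for n
    by simp
  then show ?thesis unfolding phases_apart_def by (metis minus_minus)
qed

lemma phases_apart_opposite:
  assumes "real m * v = a + pi + 2 * pi * of_int z" "real m * c = b + 2 * pi * of_int z'"
    and "\<bar>a - b\<bar> \<le> pi / 2"
  shows "phases_apart v c"
  unfolding phases_apart_def
proof
  fix n :: int
  define j where "j = z - z' - int m * n"
  have "1 \<le> \<bar>1 + 2 * j\<bar>" by presburger
  then have "2 * (pi / 2) \<le> \<bar>pi * (1 + 2 * of_int j)\<bar>"
    by (simp add: abs_mult)
  moreover have "real m * (v - c - 2 * pi * of_int n) = (a - b) + pi * (1 + 2 * of_int j)"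
    using assms(1,2) by (simp add: j_def algebra_simps)
  ultimately have "pi / 2 / real m \<le> \<bar>v - c - 2 * pi * of_int n\<bar>"
    using scaled_abs_add_ge[where c = "real m" and d = "pi / 2" and x = "a - b"] assms(3) m_pos
    by simp
  then show "pi / (2 * real m) \<le> \<bar>v - c - 2 * pi * of_int n\<bar>" by simp
qed

lemma phase_curve_eq_or_apart:
  assumes "real m * v = a + 2 * pi * of_int z" "real m * c = b + 2 * pi * of_int z'"
    and "\<bar>a - b\<bar> \<le> pi / 2"
  shows "phase_curve v = phase_curve (c + (a - b) / real m) \<or> phases_apart v c"
proof (cases "int m dvd z - z'")
  case True
  then obtain q where "z - z' = int m * q" by blast
  then have "v = c + (a - b) / real m + 2 * pi * of_int q"
    using assms(1,2) m_pos by (simp add: field_simps)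
  then show ?thesis by (simp add: phase_curve_shift)
next
  case False
  have "pi / (2 * real m) \<le> \<bar>v - c - 2 * pi * of_int n\<bar>" for n :: int
  proof -
    define j where "j = z - z' - int m * n"
    have "j \<noteq> 0" using False by (auto simp: j_def)
    then have "2 * (pi / 2) \<le> \<bar>2 * pi * of_int j\<bar>"
      using one_le_abs_of_int_nonzero[of j] by (simp add: abs_mult)
    moreover have "real m * (v - c - 2 * pi * of_int n) = (a - b) + 2 * pi * of_int j"
      using assms(1,2) by (simp add: j_def algebra_simps)
    ultimately have "pi / 2 / real m \<le> \<bar>v - c - 2 * pi * of_int n\<bar>"
      using scaled_abs_add_ge[where c = "real m" and d = "pi / 2" and x = "a - b"] assms(3) m_pos
      by simp
    then show ?thesis by simp
  qed
  then show ?thesis unfolding phases_apart_def by blast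
qed

definition tube_radius :: real where
  "tube_radius = pi / (2 * real m * (real k + real l))"

lemma tube_radius_pos: "tube_radius > 0"
  unfolding tube_radius_def using m_pos k_pos by simp

lemma tube_radius_le_infdist:
  assumes "p \<in> phase_curve v" "phases_apart v c"
  shows "tube_radius \<le> infdist p (phase_curve c)"
proof -
  obtain n1 :: int where n1: "phase p = v + 2 * pi * of_int n1"
    using assms(1) unfolding phase_curve_def by blast
  have "pi / (2 * real m) \<le> \<bar>phase p - c - 2 * pi * of_int n\<bar>" for n :: int
  proof -
    have "phase p - c - 2 * pi * of_int n = v - c - 2 * pi * of_int (n - n1)"
      using n1 by (simp add: algebra_simps)
    then show ?thesis using assms(2) unfolding phases_apart_def by metis
  qed
  then have "pi / (2 * real m) / (real k + real l) \<le> infdist p (phase_curve c)"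
    by (rule infdist_phase_curve_ge)
  then show ?thesis by (simp add: tube_radius_def)
qed

text \<open>The bound on \<open>lag \<epsilon>\<close> keeps the two classes of cycle phases apart and each cycle inside
  the tube of radius \<open>tube_radius\<close> around its critical curve.\<close>

definition admissible :: "real \<Rightarrow> bool" where
  "admissible \<epsilon> \<longleftrightarrow> 0 < \<epsilon> \<and> real l * \<epsilon> < real k \<and> lag \<epsilon> \<le> pi / (4 * (real k + real l))"

lemma lag_tendsto: "(lag \<longlongrightarrow> 0) (at_right 0)"
proof -
  have "((\<lambda>\<epsilon>. real l * \<epsilon> / real k) \<longlongrightarrow> real l * 0 / real k) (at_right 0)"
    using k_pos by (intro tendsto_intros) auto
  then have "((\<lambda>\<epsilon>. arcsin (real l * \<epsilon> / real k)) \<longlongrightarrow> arcsin 0) (at_right 0)"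
    using isCont_tendsto_compose[OF isCont_arcsin[of 0]] by simp
  then show ?thesis unfolding lag_def[abs_def] by simp
qed

lemma eventually_admissible: "eventually admissible (at_right 0)"
proof -
  have "((\<lambda>\<epsilon>. real l * \<epsilon>) \<longlongrightarrow> real l * 0) (at_right 0)"
    by (intro tendsto_intros)
  then have "eventually (\<lambda>\<epsilon>. real l * \<epsilon> < real k) (at_right 0)"
    using k_pos by (intro order_tendstoD(2)) auto
  moreover have "eventually (\<lambda>\<epsilon>. lag \<epsilon> < pi / (4 * (real k + real l))) (at_right 0)"
    using k_pos by (intro order_tendstoD(2)[OF lag_tendsto]) simp
  ultimately show ?thesis
    unfolding admissible_def using eventually_at_right_less[of 0]
    by eventually_elim auto
qed

lemma admissible_interval: "\<exists>\<epsilon>0>0. \<forall>\<epsilon>\<in>{0<..\<epsilon>0}. admissible \<epsilon>"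
proof -
  obtain b where "b > 0" "\<And>\<epsilon>. 0 < \<epsilon> \<Longrightarrow> \<epsilon> < b \<Longrightarrow> admissible \<epsilon>"
    using eventually_admissible unfolding eventually_at_right_field by auto
  then show ?thesis by (intro exI[of _ "b / 2"]) auto
qed

lemma admissible_lag:
  assumes "admissible \<epsilon>" shows "0 \<le> lag \<epsilon>" and "lag \<epsilon> \<le> pi / 4"
proof -
  have "0 \<le> real l * \<epsilon> / real k" "real l * \<epsilon> / real k \<le> 1"
    using assms k_pos unfolding admissible_def by auto
  then show "0 \<le> lag \<epsilon>"
    unfolding lag_def using arcsin_le_arcsin[of 0 "real l * \<epsilon> / real k"] by simp
  have "pi / (4 * (real k + real l)) \<le> pi / 4"
    using k_pos by (intro divide_left_mono) auto
  then show "lag \<epsilon> \<le> pi / 4"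
    using assms unfolding admissible_def by linarith
qed

lemma cycle_phase_curves_eq_or_apart:
  assumes "admissible \<epsilon>" "cycle_phase \<epsilon> v" "cycle_phase \<epsilon> v'"
  shows "phase_curve v' = phase_curve v \<or> phases_apart v' v"
proof -
  note lag = admissible_lag[OF assms(1)]
  from assms(2) show ?thesis
  proof (cases rule: cycle_phase_cases)
    case (stable n)
    from assms(3) show ?thesis
    proof (cases rule: cycle_phase_cases)
      case (stable n')
      with \<open>real m * v = lag \<epsilon> + 2 * pi * of_int n\<close> show ?thesis
        using phase_curve_eq_or_apart[of v' "lag \<epsilon>" n' v "lag \<epsilon>" n] by simp
    next
      case (unstable n')
      with \<open>real m * v = lag \<epsilon> + 2 * pi * of_int n\<close> show ?thesis
        using phases_apart_opposite[of v' "- lag \<epsilon>" n' v "lag \<epsilon>" n] lag by simp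
    qed
  next
    case (unstable n)
    from assms(3) show ?thesis
    proof (cases rule: cycle_phase_cases)
      case (stable n')
      with \<open>real m * v = - lag \<epsilon> + pi + 2 * pi * of_int n\<close> show ?thesis
        using phases_apart_opposite[of v "- lag \<epsilon>" n v' "lag \<epsilon>" n'] lag
        by (simp add: phases_apart_commute)
    next
      case (unstable n')
      with \<open>real m * v = - lag \<epsilon> + pi + 2 * pi * of_int n\<close> show ?thesis
        using phase_curve_eq_or_apart[of v' "- lag \<epsilon> + pi" n' v "- lag \<epsilon> + pi" n] by simp
    qed
  qed
qed

lemma cycle_phase_curve_near_critical:
  assumes "admissible \<epsilon>" "cycle_phase \<epsilon> v"
  shows "phase_curve v = phase_curve (o_minus i \<epsilon>) \<or> phases_apart v (c_minus i)"
    and "phase_curve v = phase_curve (o_plus i \<epsilon>) \<or> phases_apart v (c_plus i)"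
proof -
  note lag = admissible_lag[OF assms(1)]
  from assms(2)
  have "(phase_curve v = phase_curve (o_minus i \<epsilon>) \<or> phases_apart v (c_minus i)) \<and>
      (phase_curve v = phase_curve (o_plus i \<epsilon>) \<or> phases_apart v (c_plus i))"
  proof (cases rule: cycle_phase_cases)
    case (stable n)
    then show ?thesis
      using phase_curve_eq_or_apart[OF stable m_c_minus, of i] lag
        phases_apart_opposite[OF m_c_plus stable, of i] o_minus_def
      by (simp add: phases_apart_commute)
  next
    case (unstable n)
    then have "real m * v = (- lag \<epsilon> + pi) + 2 * pi * of_int n" by simp
    then show ?thesis
      using phases_apart_opposite[OF unstable m_c_minus, of i] lag
        phase_curve_eq_or_apart[of v "- lag \<epsilon> + pi" n "c_plus i" pi "int i - 1"] m_c_plus[of i]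
      by (simp add: o_plus_def)
  qed
  then show "phase_curve v = phase_curve (o_minus i \<epsilon>) \<or> phases_apart v (c_minus i)"
    and "phase_curve v = phase_curve (o_plus i \<epsilon>) \<or> phases_apart v (c_plus i)"
    by auto
qed

lemma limit_cycle_phase_curve:
  assumes "admissible \<epsilon>" "cycle_phase \<epsilon> v"
  shows "limit_cycle (Yfield m k l \<epsilon>) (phase_curve v)"
  unfolding limit_cycle_def
proof (intro conjI exI[of _ tube_radius] allI impI)
  have \<epsilon>: "0 < \<epsilon>" "real l * \<epsilon> < real k" using assms(1) by (auto simp: admissible_def)
  show "periodic_orbit (Yfield m k l \<epsilon>) (phase_curve v)"
    using periodic_orbit_phase_curve[OF \<epsilon> assms(2)] .
  show "0 < tube_radius" by (rule tube_radius_pos)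
  fix Orb assume Orb: "periodic_orbit (Yfield m k l \<epsilon>) Orb \<and> Orb \<noteq> phase_curve v"
  then have "periodic_orbit (Yfield m k l \<epsilon>) Orb" by blast
  then obtain v' where v': "cycle_phase \<epsilon> v'" "Orb = phase_curve v'"
    by (rule periodic_orbit_is_phase_curve[OF \<epsilon>])
  then have "phases_apart v' v"
    using Orb cycle_phase_curves_eq_or_apart[OF assms] by blast
  then show "\<exists>p\<in>Orb. tube_radius \<le> infdist p (phase_curve v)"
    using v'(2) base_point_in_phase_curve tube_radius_le_infdist by blast
qed

lemma cycles_in_tubes:
  assumes "admissible \<epsilon>"
  shows "phase_curve (o_minus i \<epsilon>) \<subseteq> {p. infdist p (phase_curve (c_minus i)) < tube_radius}"
    and "phase_curve (o_plus i \<epsilon>) \<subseteq> {p. infdist p (phase_curve (c_plus i)) < tube_radius}"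
proof -
  have "pi / (4 * (real k + real l)) < pi / (2 * (real k + real l))"
    using k_pos by (intro divide_strict_left_mono) auto
  then have "lag \<epsilon> < pi / (2 * (real k + real l))"
    using assms unfolding admissible_def by linarith
  moreover have "tube_radius = pi / (2 * (real k + real l)) / real m"
    by (simp add: tube_radius_def mult.commute)
  ultimately have "lag \<epsilon> / real m < tube_radius"
    using m_pos divide_strict_right_mono[of "lag \<epsilon>" "pi / (2 * (real k + real l))" "real m"] by simp
  moreover have "\<bar>o_minus i \<epsilon> - c_minus i\<bar> = lag \<epsilon> / real m" "\<bar>o_plus i \<epsilon> - c_plus i\<bar> = lag \<epsilon> / real m"
    using admissible_lag[OF assms] by (simp_all add: o_minus_def o_plus_def)
  ultimately show "phase_curve (o_minus i \<epsilon>) \<subseteq> {p. infdist p (phase_curve (c_minus i)) < tube_radius}"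
    and "phase_curve (o_plus i \<epsilon>) \<subseteq> {p. infdist p (phase_curve (c_plus i)) < tube_radius}"
    using infdist_phase_curve_le by (fastforce intro: le_less_trans)+
qed

lemma limit_cycle_in_tube_unique:
  assumes "admissible \<epsilon>" "limit_cycle (Yfield m k l \<epsilon>) Orb"
  shows "Orb \<subseteq> {p. infdist p (phase_curve (c_minus i)) < tube_radius} \<Longrightarrow> Orb = phase_curve (o_minus i \<epsilon>)"
    and "Orb \<subseteq> {p. infdist p (phase_curve (c_plus i)) < tube_radius} \<Longrightarrow> Orb = phase_curve (o_plus i \<epsilon>)"
proof -
  have "0 < \<epsilon>" "real l * \<epsilon> < real k" "periodic_orbit (Yfield m k l \<epsilon>) Orb"
    using assms unfolding limit_cycle_def admissible_def by auto
  then obtain v where v: "cycle_phase \<epsilon> v" "Orb = phase_curve v"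
    by (rule periodic_orbit_is_phase_curve)
  have "base_point v \<in> Orb" using v(2) base_point_in_phase_curve by simp
  then have not_apart: "\<not> phases_apart v c" if "Orb \<subseteq> {p. infdist p (phase_curve c) < tube_radius}" for c
    using that tube_radius_le_infdist[OF base_point_in_phase_curve] by fastforce
  show "Orb = phase_curve (o_minus i \<epsilon>)"
    if "Orb \<subseteq> {p. infdist p (phase_curve (c_minus i)) < tube_radius}"
    using not_apart[OF that] cycle_phase_curve_near_critical(1)[OF assms(1) v(1), of i] v(2) by simp
  show "Orb = phase_curve (o_plus i \<epsilon>)"
    if "Orb \<subseteq> {p. infdist p (phase_curve (c_plus i)) < tube_radius}"
    using not_apart[OF that] cycle_phase_curve_near_critical(2)[OF assms(1) v(1), of i] v(2) by simp
qed

section \<open>Poincare multipliers\<close>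

lemma lift_curve_on_transversal:
  shows "lift_curve \<epsilon> 0 \<theta> 0 = base_point v + ((v - \<theta> 0 / real m) / real k) *\<^sub>R (1, 0)"
    and "\<epsilon> \<noteq> 0 \<Longrightarrow> teq (lift_curve \<epsilon> 0 \<theta> (2 * pi * real k / \<epsilon>))
      (base_point v + ((v - \<theta> (2 * pi * real k / \<epsilon>) / real m) / real k) *\<^sub>R (1, 0))"
proof -
  show start: "lift_curve \<epsilon> 0 \<theta> 0 = base_point v + ((v - \<theta> 0 / real m) / real k) *\<^sub>R (1, 0)" for \<theta>
    using k_pos by (simp add: lift_curve_def base_point_def field_simps)
  assume "\<epsilon> \<noteq> 0"
  then show "teq (lift_curve \<epsilon> 0 \<theta> (2 * pi * real k / \<epsilon>))
      (base_point v + ((v - \<theta> (2 * pi * real k / \<epsilon>) / real m) / real k) *\<^sub>R (1, 0))"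
    using lift_curve_period[of \<epsilon> 0 \<theta>] start[of "\<lambda>_. \<theta> (2 * pi * real k / \<epsilon>)"]
      lattice_mem_nat_mult[of l 1 k]
    by (simp add: teq_def)
qed

text \<open>The Poincare map of a cycle is computed on the horizontal transversal through its base
  point: a family \<open>\<Theta> s\<close> of phase solutions starting at the points of the transversal determines
  the return map, and its derivative the multiplier.\<close>

lemma poincare_multiplier_phase_curve:
  assumes \<epsilon>: "0 < \<epsilon>" "real l * \<epsilon> < real k" and v: "cycle_phase \<epsilon> v" and "d > 0"
    and \<Theta>: "\<And>s. \<bar>s\<bar> < d \<Longrightarrow> solves_phase_eq \<epsilon> (\<Theta> s) \<and> \<Theta> s 0 = real m * v - real m * real k * s"
    and \<Theta>0: "\<Theta> 0 (2 * pi * real k / \<epsilon>) = real m * v"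
    and \<mu>: "((\<lambda>s. \<Theta> s (2 * pi * real k / \<epsilon>)) has_real_derivative - real m * real k * \<mu>) (at 0)"
  shows "poincare_multiplier (Yfield m k l \<epsilon>) (phase_curve v) \<mu>"
proof -
  define T where "T = 2 * pi * real k / \<epsilon>"
  define g where "g s = (v - \<Theta> s T / real m) / real k" for s
  have mk: "real m > 0" "real k > 0" using m_pos k_pos by auto
  have "(g has_real_derivative (0 - (- real m * real k * \<mu>) / real m) / real k) (at 0)"
    unfolding g_def[abs_def] using \<mu> by (auto intro!: derivative_eq_intros simp: T_def)
  then have g': "(g has_real_derivative \<mu>) (at 0)"
    using mk by simp
  have return: "\<exists>\<psi>. is_sol (Yfield m k l \<epsilon>) \<psi> \<and> \<psi> 0 = base_point v + s *\<^sub>R (1, 0) \<and>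
      teq (\<psi> T) (base_point v + g s *\<^sub>R (1, 0))" if "s \<in> {- d<..<d}" for s
  proof (intro exI conjI)
    have s: "\<bar>s\<bar> < d" using that by auto
    show "is_sol (Yfield m k l \<epsilon>) (lift_curve \<epsilon> 0 (\<Theta> s))"
      using \<Theta>[OF s] by (intro is_sol_lift_curve) simp
    show "lift_curve \<epsilon> 0 (\<Theta> s) 0 = base_point v + s *\<^sub>R (1, 0)"
      using lift_curve_on_transversal(1)[of \<epsilon> "\<Theta> s" v] \<Theta>[OF s] mk by (simp add: field_simps)
    show "teq (lift_curve \<epsilon> 0 (\<Theta> s) T) (base_point v + g s *\<^sub>R (1, 0))"
      unfolding T_def g_def using \<epsilon> by (intro lift_curve_on_transversal(2)) simp
  qed
  show ?thesis
    unfolding poincare_multiplier_def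
  proof (rule exI[of _ "straight_orbit \<epsilon> v"], rule exI[of _ T], rule exI[of _ "(1, 0)"],
      rule exI[of _ d], rule exI[of _ "\<lambda>s. T"], rule exI[of _ g], intro conjI ballI)
    show "is_sol (Yfield m k l \<epsilon>) (straight_orbit \<epsilon> v)"
      and "teq (straight_orbit \<epsilon> v T) (straight_orbit \<epsilon> v 0)"
      and "Yfield m k l \<epsilon> (straight_orbit \<epsilon> v 0) \<noteq> 0"
      and "phase_curve v = torus_image (straight_orbit \<epsilon> v) UNIV"
      using straight_orbit_closed[OF \<epsilon> v] by (simp_all add: T_def)
    show "0 < T" using \<epsilon> mk by (simp add: T_def)
    show "fst (Yfield m k l \<epsilon> (straight_orbit \<epsilon> v 0)) * snd (1::real, 0::real) -
        snd (Yfield m k l \<epsilon> (straight_orbit \<epsilon> v 0)) * fst (1::real, 0::real) \<noteq> 0"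
      using \<epsilon> by (simp add: Yfield_phase)
    show "continuous_on {- d<..<d} (\<lambda>s. T)" by (rule continuous_on_const)
    show "g 0 = 0" using \<Theta>0 mk by (simp add: g_def T_def)
    show "0 < d" by fact
    show "(\<lambda>s. T) 0 = T" by simp
    show "(g has_real_derivative \<mu>) (at 0)" by (rule g')
  qed (use return m_pos in \<open>simp_all add: lift_curve_def base_point_def\<close>)
qed

lemma hyperbolic_attracting_o_minus:
  assumes "admissible \<epsilon>"
  shows "hyperbolic_attracting (Yfield m k l \<epsilon>) (phase_curve (o_minus i \<epsilon>))"
proof -
  have \<epsilon>: "0 < \<epsilon>" "real l * \<epsilon> < real k" using assms by (auto simp: admissible_def)
  interpret adler "real m * real l * \<epsilon>" "real m * real k"
    using adler_phase_eq \<epsilon> by simp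
  have angle: "angle = lag \<epsilon>" using adler_angle_lag \<epsilon> by simp
  have mk: "real m * real k > 0" using m_pos k_pos by simp
  define T where "T = 2 * pi * real k / \<epsilon>"
  define \<Theta> where "\<Theta> s = sol (int i - 1) (tan (angle - real m * real k / 2 * s))" for s
  have "poincare_multiplier (Yfield m k l \<epsilon>) (phase_curve (o_minus i \<epsilon>)) (exp (- rate * T))"
  proof (rule poincare_multiplier_phase_curve[OF \<epsilon> cycle_phase_o_minus])
    show "0 < (pi - 2 * angle) / (real m * real k)"
      using angle_bounds mk by simp
    show "solves_phase_eq \<epsilon> (\<Theta> s) \<and> \<Theta> s 0 = real m * o_minus i \<epsilon> - real m * real k * s"
      if "\<bar>s\<bar> < (pi - 2 * angle) / (real m * real k)" for s
    proof
      have "\<bar>- (real m * real k / 2 * s)\<bar> < pi / 2 - angle"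
        using that mk by (simp add: abs_mult field_simps)
      then show "\<Theta> s 0 = real m * o_minus i \<epsilon> - real m * real k * s"
        using arctan_tan_angle_add[of "- (real m * real k / 2 * s)"]
        by (simp add: \<Theta>_def sol_0 m_o_minus angle)
    qed (simp add: \<Theta>_def sol_solves)
    show "\<Theta> 0 (2 * pi * real k / \<epsilon>) = real m * o_minus i \<epsilon>"
      by (simp add: \<Theta>_def sol_tan_angle m_o_minus flip: angle)
    show "((\<lambda>s. \<Theta> s (2 * pi * real k / \<epsilon>)) has_real_derivative - real m * real k * exp (- rate * T)) (at 0)"
      using sol_deriv_initial[of "int i - 1" "real m * real k / 2" T] by (simp add: \<Theta>_def T_def)
  qed
  moreover have "exp (- rate * T) < 1"
    using rate_pos \<epsilon> k_pos by (simp add: T_def)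
  ultimately show ?thesis
    unfolding hyperbolic_attracting_def
    using limit_cycle_phase_curve[OF assms cycle_phase_o_minus] by auto
qed

text \<open>For the repelling cycles the phase solutions are obtained from the explicit ones by the
  symmetry \<open>\<theta>(t) \<mapsto> \<pi> - \<theta>(-t)\<close> of Adler's equation.\<close>

lemma hyperbolic_repelling_o_plus:
  assumes "admissible \<epsilon>"
  shows "hyperbolic_repelling (Yfield m k l \<epsilon>) (phase_curve (o_plus i \<epsilon>))"
proof -
  have \<epsilon>: "0 < \<epsilon>" "real l * \<epsilon> < real k" using assms by (auto simp: admissible_def)
  interpret adler "real m * real l * \<epsilon>" "real m * real k"
    using adler_phase_eq \<epsilon> by simp
  have angle: "angle = lag \<epsilon>" using adler_angle_lag \<epsilon> by simp
  have mk: "real m * real k > 0" using m_pos k_pos by simp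
  define T where "T = 2 * pi * real k / \<epsilon>"
  define \<Theta> where "\<Theta> s t = pi - sol (1 - int i) (tan (angle + real m * real k / 2 * s)) (- t)" for s t
  have "poincare_multiplier (Yfield m k l \<epsilon>) (phase_curve (o_plus i \<epsilon>)) (exp (rate * T))"
  proof (rule poincare_multiplier_phase_curve[OF \<epsilon> cycle_phase_o_plus])
    show "0 < (pi - 2 * angle) / (real m * real k)"
      using angle_bounds mk by simp
    show "solves_phase_eq \<epsilon> (\<Theta> s) \<and> \<Theta> s 0 = real m * o_plus i \<epsilon> - real m * real k * s"
      if "\<bar>s\<bar> < (pi - 2 * angle) / (real m * real k)" for s
    proof
      have "\<bar>real m * real k / 2 * s\<bar> < pi / 2 - angle"
        using that mk by (simp add: abs_mult field_simps)
      then have "\<Theta> s 0 = pi - (- angle + 2 * pi * of_int (1 - int i) + 2 * (angle + real m * real k / 2 * s))"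
        using arctan_tan_angle_add[of "real m * real k / 2 * s"] by (simp add: \<Theta>_def sol_0)
      then show "\<Theta> s 0 = real m * o_plus i \<epsilon> - real m * real k * s"
        unfolding m_o_plus by (simp only: angle) (simp add: algebra_simps)
    qed (unfold \<Theta>_def, rule solves_reflect, rule sol_solves)
    show "\<Theta> 0 (2 * pi * real k / \<epsilon>) = real m * o_plus i \<epsilon>"
      unfolding m_o_plus by (simp add: \<Theta>_def sol_tan_angle flip: angle) (simp add: algebra_simps)
    have "((\<lambda>s. sol (1 - int i) (tan (angle + real m * real k / 2 * s)) (- T)) has_real_derivative
        real m * real k * exp (rate * T)) (at 0)"
      using sol_deriv_initial[of "1 - int i" "- (real m * real k / 2)" "- T"] by simp
    then show "((\<lambda>s. \<Theta> s (2 * pi * real k / \<epsilon>)) has_real_derivative - real m * real k * exp (rate * T)) (at 0)"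
      unfolding \<Theta>_def T_def[symmetric] by (auto intro!: derivative_eq_intros)
  qed
  moreover have "exp (rate * T) > 1"
    using rate_pos \<epsilon> k_pos by (simp add: T_def)
  ultimately show ?thesis
    unfolding hyperbolic_repelling_def
    using limit_cycle_phase_curve[OF assms cycle_phase_o_plus] by auto
qed

section \<open>The limit \<open>\<epsilon> \<rightarrow> 0\<close>: Hausdorff convergence and canards\<close>

lemma hausdorff_tendsto_phase_curve:
  assumes "(v \<longlongrightarrow> c) (at_right 0)"
  shows "hausdorff_tendsto (\<lambda>\<epsilon>. phase_curve (v \<epsilon>)) (phase_curve c)"
  unfolding hausdorff_tendsto_def
proof (intro allI impI)
  fix e :: real assume "e > 0"
  with assms have "eventually (\<lambda>\<epsilon>. \<bar>v \<epsilon> - c\<bar> < e) (at_right 0)"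
    by (auto dest: tendstoD simp: dist_real_def)
  then show "eventually (\<lambda>\<epsilon>. (\<forall>p\<in>phase_curve (v \<epsilon>). infdist p (phase_curve c) < e) \<and>
      (\<forall>q\<in>phase_curve c. infdist q (phase_curve (v \<epsilon>)) < e)) (at_right 0)"
  proof eventually_elim
    case (elim \<epsilon>)
    have "infdist p (phase_curve c) < e" if "p \<in> phase_curve (v \<epsilon>)" for p
      using infdist_phase_curve_le[OF that, of c] elim by linarith
    moreover have "infdist q (phase_curve (v \<epsilon>)) < e" if "q \<in> phase_curve c" for q
      using infdist_phase_curve_le[OF that, of "v \<epsilon>"] elim by (simp add: abs_minus_commute)
    ultimately show ?case by blast
  qed
qed

lemma o_minus_tendsto: "(o_minus i \<longlongrightarrow> c_minus i) (at_right 0)"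
  and o_plus_tendsto: "(o_plus i \<longlongrightarrow> c_plus i) (at_right 0)"
  unfolding o_minus_def[abs_def] o_plus_def[abs_def]
  using lag_tendsto m_pos by (auto intro!: tendsto_eq_intros)

lemma Yfield_0_derivative:
  "(Yfield m k l 0 has_derivative (\<lambda>h. (cos (real m * phase p) * (real m * phase h), 0))) (at p)"
proof -
  have "((\<lambda>q. sin (real m * phase q)) has_derivative
      (\<lambda>h. real m * phase h * cos (real m * phase p))) (at p)"
    unfolding phase_def
    by (intro DERIV_compose_FDERIV[OF DERIV_sin] has_derivative_mult_right has_derivative_diff
        has_derivative_snd has_derivative_fst has_derivative_ident)
  then have "((\<lambda>q. (sin (real m * phase q), 0::real)) has_derivative
      (\<lambda>h. (real m * phase h * cos (real m * phase p), 0))) (at p)"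
    by (rule has_derivative_Pair[OF _ has_derivative_const])
  moreover have "Yfield m k l 0 = (\<lambda>q. (sin (real m * phase q), 0))"
    by (simp add: fun_eq_iff Yfield_phase)
  ultimately show ?thesis
    by (simp add: mult.commute)
qed

lemma normally_repelling_phase:
  assumes "normally_repelling (Yfield m k l 0) p"
  obtains z :: int where "real m * phase p = 0 + pi + 2 * pi * of_int z"
proof -
  obtain D w c where D: "Yfield m k l 0 p = 0" "(Yfield m k l 0 has_derivative D) (at p)"
    and w: "w \<noteq> 0" "c > 0" "D w = c *\<^sub>R w"
    using assms unfolding normally_repelling_def by blast
  have D_eq: "D = (\<lambda>h. (cos (real m * phase p) * (real m * phase h), 0))"
    using has_derivative_unique[OF D(2) Yfield_0_derivative] .
  have "snd w = 0" using w(2,3) unfolding D_eq by (auto simp: prod_eq_iff)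
  with w have "fst w \<noteq> 0" and "- cos (real m * phase p) * (real m * real k) * fst w = c * fst w"
    unfolding D_eq phase_def by (auto simp: prod_eq_iff algebra_simps)
  then have "cos (real m * phase p) * (real m * real k) < 0"
    using w(2) by (metis mult_right_cancel neg_0_less_iff_less mult_minus_left)
  then have "cos (real m * phase p) < 0"
    using m_pos k_pos by (simp add: mult_less_0_iff)
  then have "cos (real m * phase p) \<noteq> 1"
    by auto
  moreover have "sin (real m * phase p) = 0"
    using D(1) by (simp add: Yfield_phase zero_prod_def)
  then have "cos (real m * phase p) = 1 \<or> cos (real m * phase p) = -1"
    using sin_cos_squared_add[of "real m * phase p"] by (simp add: power2_eq_1_iff)
  ultimately have "cos (real m * phase p + pi) = 1" by simp
  then obtain n :: int where "real m * phase p + pi = of_int n * 2 * pi"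
    using cos_one_2pi_int by blast
  then have "real m * phase p = 0 + pi + 2 * pi * of_int (n - 1)"
    by (simp add: algebra_simps)
  then show ?thesis by (rule that)
qed

lemma normally_repelling_base_point: "normally_repelling (Yfield m k l 0) (base_point (c_plus i))"
  unfolding normally_repelling_def
proof (intro conjI exI[of _ "\<lambda>h. (- real m * phase h, 0)"])
  have "real m * phase (base_point (c_plus i)) = pi + 2 * pi * of_int (int i - 1)"
    using m_c_plus by (simp add: phase_base_point)
  then have sc: "sin (real m * phase (base_point (c_plus i))) = 0"
    and cc: "cos (real m * phase (base_point (c_plus i))) = -1"
    by (simp_all only: sin_plus_2pi_int cos_plus_2pi_int) simp_all
  show "Yfield m k l 0 (base_point (c_plus i)) = 0"
    using sc by (simp add: Yfield_phase zero_prod_def)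
  show "(Yfield m k l 0 has_derivative (\<lambda>h. (- real m * phase h, 0))) (at (base_point (c_plus i)))"
    using Yfield_0_derivative[of "base_point (c_plus i)"] by (simp add: cc)
  show "\<exists>v. v \<noteq> 0 \<and> (- real m * phase v, 0) = 0"
    using k_pos by (intro exI[of _ "(real l, real k)"]) (simp add: phase_def zero_prod_def)
  show "\<exists>w c. w \<noteq> 0 \<and> 0 < c \<and> (- real m * phase w, 0) = c *\<^sub>R w"
    using k_pos m_pos by (intro exI[of _ "(1, 0)"] exI[of _ "real m * real k"]) (simp add: phase_def zero_prod_def)
qed

lemma normally_repelling_near_c_plus:
  assumes b: "b \<in> ball (base_point (c_plus i)) (pi / real m / (real k + real l))"
    and nr: "normally_repelling (Yfield m k l 0) b"
  shows "b \<in> phase_curve (c_plus i)"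
proof -
  let ?a = "base_point (c_plus i)"
  obtain z :: int where z: "real m * phase b = 0 + pi + 2 * pi * of_int z"
    using normally_repelling_phase[OF nr] .
  have "\<bar>phase ?a - phase b\<bar> \<le> (real k + real l) * dist ?a b"
    by (rule phase_lipschitz)
  also have "\<dots> < (real k + real l) * (pi / real m / (real k + real l))"
    using b k_pos by (intro mult_strict_left_mono) auto
  also have "\<dots> = pi / real m"
    using k_pos by simp
  finally have "real m * \<bar>phase ?a - phase b\<bar> < pi"
    using m_pos by (simp add: field_simps)
  then have "\<bar>real m * (phase ?a - phase b)\<bar> < pi"
    by (simp add: abs_mult)
  moreover define j where "j = int i - 1 - z"
  have "real m * (phase ?a - phase b) = pi * (2 * of_int j)"
    using z m_c_plus[of i] by (simp add: j_def phase_base_point algebra_simps)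
  ultimately have "pi * \<bar>2 * of_int j\<bar> < pi * 1"
    by (simp add: abs_mult)
  then have "j = 0"
    using pi_gt_zero by (simp only: mult_less_cancel_left_pos)
  then have "real m * phase b = real m * c_plus i"
    using z m_c_plus[of i] by (simp add: j_def)
  then show ?thesis
    using m_pos in_phase_curve_phase[of b] by simp
qed

text \<open>The cycles \<open>O\<^sub>+\<^sup>i\<close> are canards because they converge to \<open>C\<^sub>+\<^sup>i\<close>, which consists of
  repelling singularities; the \<open>O\<^sub>-\<^sup>i\<close> are not, since every repelling singularity lies a tube
  radius away from them.\<close>

lemma canard_o_plus: "canard_family (Yfield m k l 0) (\<lambda>\<epsilon>. phase_curve (o_plus i \<epsilon>))"
  unfolding canard_family_def
proof (intro exI[of _ "base_point (c_plus i)"] exI[of _ "pi / real m / (real k + real l)"] conjI allI impI)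
  let ?a = "base_point (c_plus i)"
  show "0 < pi / real m / (real k + real l)"
    using m_pos k_pos by simp
  show "normally_repelling (Yfield m k l 0) ?a"
    by (rule normally_repelling_base_point)
  fix e :: real assume "e > 0"
  from o_plus_tendsto[of i, THEN tendstoD, OF this]
  show "eventually (\<lambda>\<epsilon>. \<forall>b. b \<in> ball ?a (pi / real m / (real k + real l)) \<and>
      normally_repelling (Yfield m k l 0) b \<longrightarrow> infdist b (phase_curve (o_plus i \<epsilon>)) < e) (at_right 0)"
  proof eventually_elim
    case (elim \<epsilon>)
    show ?case
    proof (intro allI impI, elim conjE)
      fix b assume "b \<in> ball ?a (pi / real m / (real k + real l))" "normally_repelling (Yfield m k l 0) b"
      then have "infdist b (phase_curve (o_plus i \<epsilon>)) \<le> \<bar>c_plus i - o_plus i \<epsilon>\<bar>"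
        by (intro infdist_phase_curve_le normally_repelling_near_c_plus)
      also have "\<dots> < e"
        using elim by (simp add: dist_real_def abs_minus_commute)
      finally show "infdist b (phase_curve (o_plus i \<epsilon>)) < e" .
    qed
  qed
qed

lemma not_canard_o_minus: "\<not> canard_family (Yfield m k l 0) (\<lambda>\<epsilon>. phase_curve (o_minus i \<epsilon>))"
proof
  assume "canard_family (Yfield m k l 0) (\<lambda>\<epsilon>. phase_curve (o_minus i \<epsilon>))"
  then obtain a r where "r > 0" and a: "normally_repelling (Yfield m k l 0) a"
    and near0: "\<forall>e>0. eventually (\<lambda>\<epsilon>. \<forall>b. b \<in> ball a r \<and> normally_repelling (Yfield m k l 0) b \<longrightarrow>
      infdist b (phase_curve (o_minus i \<epsilon>)) < e) (at_right 0)"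
    unfolding canard_family_def by blast
  from near0[rule_format, OF tube_radius_pos]
  have near: "eventually (\<lambda>\<epsilon>. infdist a (phase_curve (o_minus i \<epsilon>)) < tube_radius) (at_right 0)"
    by eventually_elim (metis centre_in_ball \<open>r > 0\<close> a)
  obtain \<epsilon> where "admissible \<epsilon>" and "infdist a (phase_curve (o_minus i \<epsilon>)) < tube_radius"
    using eventually_happens[OF eventually_conj[OF eventually_admissible near]] by auto
  moreover obtain z :: int where "real m * phase a = 0 + pi + 2 * pi * of_int z"
    using normally_repelling_phase[OF a] .
  then have "phases_apart (phase a) (o_minus i \<epsilon>)"
    using phases_apart_opposite[OF _ m_o_minus, of "phase a" 0 z] admissible_lag[OF \<open>admissible \<epsilon>\<close>]
    by simp
  ultimately show False
    using tube_radius_le_infdist[OF in_phase_curve_phase] by fastforce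
qed

section \<open>Limit sets\<close>

text \<open>The lattice-invariant function \<open>cos (phase p - v)\<close> equals \<open>1\<close> exactly on \<open>phase_curve v\<close>;
  being Lipschitz for the torus distance, it detects limit points on that curve.\<close>

lemma cos_phase_lipschitz_tdist:
  "\<bar>cos (phase p - v) - cos (phase q - v)\<bar> \<le> (real k + real l) * tdist p q"
proof -
  let ?S = "{q + w | w. w \<in> lattice}"
  have ne: "?S \<noteq> {}" using zero_in_lattice by blast
  have "\<bar>cos (phase p - v) - cos (phase q - v)\<bar> / (real k + real l) \<le> infdist p ?S"
    unfolding infdist_notempty[OF ne]
  proof (rule cINF_greatest[OF ne])
    fix x assume "x \<in> ?S"
    then obtain w where w: "w \<in> lattice" "x = q + w" by blast
    then obtain z :: int where "phase x = phase q + 2 * pi * of_int z"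
      using phase_lattice[OF w(1)] by (auto simp: phase_add)
    then have "\<bar>cos (phase p - v) - cos (phase q - v)\<bar> = \<bar>cos (phase p - v) - cos (phase x - v)\<bar>"
      using cos_plus_2pi_int[of "phase q - v" z] by (simp add: algebra_simps)
    also have "\<dots> \<le> \<bar>phase p - phase x\<bar>"
      using abs_cos_diff_le[of "phase p - v" "phase x - v"] by simp
    also have "\<dots> \<le> (real k + real l) * dist p x"
      by (rule phase_lipschitz)
    finally show "\<bar>cos (phase p - v) - cos (phase q - v)\<bar> / (real k + real l) \<le> dist p x"
      using k_pos by (simp add: divide_le_eq mult.commute)
  qed
  then show ?thesis
    unfolding tdist_def using k_pos by (simp add: divide_le_eq mult.commute)
qed

lemma limit_point_in_phase_curve:
  assumes "((\<lambda>t. phase (\<gamma> t)) \<longlongrightarrow> v) F" "filterlim tn F sequentially"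
    and "(\<lambda>n. tdist (\<gamma> (tn n)) q) \<longlonglongrightarrow> 0"
  shows "q \<in> phase_curve v"
proof -
  have "(\<lambda>n. phase (\<gamma> (tn n))) \<longlonglongrightarrow> v"
    using filterlim_compose[OF assms(1,2)] by simp
  then have "(\<lambda>n. cos (phase (\<gamma> (tn n)) - v)) \<longlonglongrightarrow> cos (v - v)"
    by (intro tendsto_intros)
  moreover have "(\<lambda>n. cos (phase (\<gamma> (tn n)) - v)) \<longlonglongrightarrow> cos (phase q - v)"
  proof (rule metric_tendsto_imp_tendsto)
    show "(\<lambda>n. (real k + real l) * tdist (\<gamma> (tn n)) q) \<longlonglongrightarrow> 0"
      using tendsto_mult_right_zero[OF assms(3)] by simp
    show "\<forall>\<^sub>F n in sequentially. dist (cos (phase (\<gamma> (tn n)) - v)) (cos (phase q - v)) \<le>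
        dist ((real k + real l) * tdist (\<gamma> (tn n)) q) 0"
      using cos_phase_lipschitz_tdist tdist_nonneg by (simp add: dist_real_def)
  qed
  ultimately have "cos (phase q - v) = 1"
    using LIMSEQ_unique by fastforce
  then show ?thesis by (simp add: phase_curve_iff_cos)
qed

text \<open>Along a trajectory the height grows linearly, so sampling at the times where it hits the height
  of a given lift of \<open>q\<close> (modulo \<open>2\<pi>k\<close>) produces points that converge to \<open>q\<close> on the torus once the
  phase converges.\<close>

lemma phase_curve_in_limit_set:
  assumes "0 < \<epsilon>" "is_sol (Yfield m k l \<epsilon>) \<gamma>" "((\<lambda>t. phase (\<gamma> t)) \<longlongrightarrow> v) F"
    and "q \<in> phase_curve v"
    and N: "\<And>c0. filterlim (\<lambda>n. c0 + 2 * pi * real k / \<epsilon> * of_int (N n)) F sequentially"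
  shows "\<exists>tn. filterlim tn F sequentially \<and> (\<lambda>n. tdist (\<gamma> (tn n)) q) \<longlonglongrightarrow> 0"
proof -
  obtain w where w: "w \<in> lattice" "phase (q + w) = v"
    using phase_curve_translate[OF assms(4)] by blast
  define tn where "tn n = (snd (q + w) - snd (\<gamma> 0)) / \<epsilon> + 2 * pi * real k / \<epsilon> * of_int (N n)" for n
  have tn: "filterlim tn F sequentially"
    unfolding tn_def[abs_def] by (rule N)
  have le: "tdist (\<gamma> (tn n)) q \<le> \<bar>v - phase (\<gamma> (tn n))\<bar> / real k" for n
  proof -
    define x where "x = q + (w + (2 * pi * real l * of_int (N n), 2 * pi * real k * of_int (N n)))"
    have "x \<in> {q + w | w. w \<in> lattice}"
      unfolding x_def using lattice_add[OF w(1) lattice_mem_nat_mult] by blast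
    then have "tdist (\<gamma> (tn n)) q \<le> dist (\<gamma> (tn n)) x"
      unfolding tdist_def by (rule infdist_le)
    moreover have "\<gamma> (tn n) - x = ((v - phase (\<gamma> (tn n))) / real k, 0)"
    proof -
      have "\<epsilon> * tn n = snd (q + w) - snd (\<gamma> 0) + 2 * pi * real k * of_int (N n)"
        using assms(1) by (simp add: tn_def field_simps)
      then have "snd (\<gamma> (tn n)) = snd (q + w) + 2 * pi * real k * of_int (N n)"
        using snd_sol[OF assms(2), of "tn n"] by simp
      moreover have "fst (\<gamma> (tn n)) = (real l * snd (\<gamma> (tn n)) - phase (\<gamma> (tn n))) / real k"
        and "fst (q + w) = (real l * snd (q + w) - v) / real k"
        using w(2) k_pos by (simp_all add: phase_def field_simps)
      ultimately show ?thesis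
        using k_pos by (simp add: x_def prod_eq_iff field_simps)
    qed
    ultimately show ?thesis
      by (simp add: dist_norm abs_divide)
  qed
  have "(\<lambda>n. \<bar>v - phase (\<gamma> (tn n))\<bar> / real k) \<longlonglongrightarrow> \<bar>v - v\<bar> / real k"
    using filterlim_compose[OF assms(3) tn] k_pos by (intro tendsto_intros) auto
  then have "(\<lambda>n. tdist (\<gamma> (tn n)) q) \<longlonglongrightarrow> 0"
    using tendsto_sandwich[where f = "\<lambda>_. 0" and g = "\<lambda>n. tdist (\<gamma> (tn n)) q"
        and h = "\<lambda>n. \<bar>v - phase (\<gamma> (tn n))\<bar> / real k"] le tdist_nonneg
    by simp
  with tn show ?thesis by blast
qed

lemma limit_set_eq_phase_curve:
  assumes "0 < \<epsilon>" "is_sol (Yfield m k l \<epsilon>) \<psi>" "\<psi> 0 = \<tau>"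
    and conv: "\<And>\<gamma>. is_sol (Yfield m k l \<epsilon>) \<gamma> \<Longrightarrow> \<gamma> 0 = \<tau> \<Longrightarrow> ((\<lambda>t. phase (\<gamma> t)) \<longlongrightarrow> v) F"
    and N: "\<And>c0. filterlim (\<lambda>n. c0 + 2 * pi * real k / \<epsilon> * of_int (N n)) F sequentially"
  shows "{q. \<exists>\<gamma> tn. is_sol (Yfield m k l \<epsilon>) \<gamma> \<and> \<gamma> 0 = \<tau> \<and> filterlim tn F sequentially \<and>
      (\<lambda>n. tdist (\<gamma> (tn n)) q) \<longlonglongrightarrow> 0} = phase_curve v"
  using limit_point_in_phase_curve[OF conv] phase_curve_in_limit_set[OF assms(1,2) conv[OF assms(2,3)] _ N] assms(2,3)
  by blast

lemma trajectory_phase_limits: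
  assumes "admissible \<epsilon>" "\<not> cycle_phase \<epsilon> (phase \<tau>)"
  obtains \<psi> and n n' :: int where "is_sol (Yfield m k l \<epsilon>) \<psi>" "\<psi> 0 = \<tau>"
    and "\<And>\<gamma>. is_sol (Yfield m k l \<epsilon>) \<gamma> \<Longrightarrow> \<gamma> 0 = \<tau> \<Longrightarrow>
      ((\<lambda>t. phase (\<gamma> t)) \<longlongrightarrow> (lag \<epsilon> + 2 * pi * of_int n) / real m) at_top"
    and "\<And>\<gamma>. is_sol (Yfield m k l \<epsilon>) \<gamma> \<Longrightarrow> \<gamma> 0 = \<tau> \<Longrightarrow>
      ((\<lambda>t. phase (\<gamma> t)) \<longlongrightarrow> (pi - lag \<epsilon> + 2 * pi * of_int n') / real m) at_bot"
proof -
  have \<epsilon>: "0 < \<epsilon>" "real l * \<epsilon> < real k" using assms(1) by (auto simp: admissible_def)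
  interpret adler "real m * real l * \<epsilon>" "real m * real k"
    using adler_phase_eq \<epsilon> by simp
  have angle: "angle = lag \<epsilon>" using adler_angle_lag \<epsilon> by simp
  have mk: "real m > 0" "real k > 0" using m_pos k_pos by auto
  obtain f where f: "solves_phase_eq \<epsilon> f" "f 0 = real m * phase \<tau>"
    using solves_exists by blast
  then have ne: "\<not> equilibrium (f 0)"
    using assms(2) cycle_phase_equilibrium \<epsilon> by simp
  obtain n :: int where top: "(f \<longlongrightarrow> angle + 2 * pi * of_int n) at_top"
    using solves_tendsto_at_top[OF f(1) ne] .
  obtain n' :: int where bot: "(f \<longlongrightarrow> pi - angle + 2 * pi * of_int n') at_bot"
    using solves_tendsto_at_bot[OF f(1) ne] .
  have phase_eq: "(\<lambda>t. phase (\<gamma> t)) = (\<lambda>t. f t / real m)"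
    if "is_sol (Yfield m k l \<epsilon>) \<gamma>" "\<gamma> 0 = \<tau>" for \<gamma>
    using solves_unique[OF solves_phase_eq_sol[OF that(1)] f(1)] that(2) f(2) mk
    by (auto simp: fun_eq_iff field_simps)
  show ?thesis
  proof (rule that)
    show "is_sol (Yfield m k l \<epsilon>) (lift_curve \<epsilon> (snd \<tau>) f)" "lift_curve \<epsilon> (snd \<tau>) f 0 = \<tau>"
      using is_sol_lift_curve[OF f(1)] f(2) mk by (auto simp: lift_curve_def phase_def prod_eq_iff)
    show "((\<lambda>t. phase (\<gamma> t)) \<longlongrightarrow> (lag \<epsilon> + 2 * pi * of_int n) / real m) at_top"
      if "is_sol (Yfield m k l \<epsilon>) \<gamma>" "\<gamma> 0 = \<tau>" for \<gamma>
      unfolding phase_eq[OF that] using top angle mk by (intro tendsto_intros) simp_all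
    show "((\<lambda>t. phase (\<gamma> t)) \<longlongrightarrow> (pi - lag \<epsilon> + 2 * pi * of_int n') / real m) at_bot"
      if "is_sol (Yfield m k l \<epsilon>) \<gamma>" "\<gamma> 0 = \<tau>" for \<gamma>
      unfolding phase_eq[OF that] using bot angle mk by (intro tendsto_intros) simp_all
  qed
qed

lemma limit_sets:
  assumes "admissible \<epsilon>"
    and "\<forall>i\<in>{1..m}. \<tau> \<notin> phase_curve (o_minus i \<epsilon>) \<and> \<tau> \<notin> phase_curve (o_plus i \<epsilon>)"
  shows "\<exists>j\<in>{1..m}. omega_limit (Yfield m k l \<epsilon>) \<tau> = phase_curve (o_minus j \<epsilon>)"
    and "\<exists>j\<in>{1..m}. alpha_limit (Yfield m k l \<epsilon>) \<tau> = phase_curve (o_plus j \<epsilon>)"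
proof -
  have "\<not> cycle_phase \<epsilon> (phase \<tau>)"
    using cycle_phase_index[of \<epsilon> "phase \<tau>"] in_phase_curve_phase[of \<tau>] assms(2) by auto
  then obtain \<psi> and n n' :: int where \<psi>: "is_sol (Yfield m k l \<epsilon>) \<psi>" "\<psi> 0 = \<tau>"
    and top: "\<And>\<gamma>. is_sol (Yfield m k l \<epsilon>) \<gamma> \<Longrightarrow> \<gamma> 0 = \<tau> \<Longrightarrow>
      ((\<lambda>t. phase (\<gamma> t)) \<longlongrightarrow> (lag \<epsilon> + 2 * pi * of_int n) / real m) at_top"
    and bot: "\<And>\<gamma>. is_sol (Yfield m k l \<epsilon>) \<gamma> \<Longrightarrow> \<gamma> 0 = \<tau> \<Longrightarrow>
      ((\<lambda>t. phase (\<gamma> t)) \<longlongrightarrow> (pi - lag \<epsilon> + 2 * pi * of_int n') / real m) at_bot"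
    using trajectory_phase_limits[OF assms(1)] by blast
  have \<epsilon>: "0 < \<epsilon>" using assms(1) by (simp add: admissible_def)
  then have T: "2 * pi * real k / \<epsilon> > 0" using k_pos by simp
  have "omega_limit (Yfield m k l \<epsilon>) \<tau> = phase_curve ((lag \<epsilon> + 2 * pi * of_int n) / real m)"
    unfolding omega_limit_def
    by (rule limit_set_eq_phase_curve[OF \<epsilon> \<psi> top filterlim_arith_progression(1)[OF T]])
  then show "\<exists>j\<in>{1..m}. omega_limit (Yfield m k l \<epsilon>) \<tau> = phase_curve (o_minus j \<epsilon>)"
    using o_minus_index by auto
  have "alpha_limit (Yfield m k l \<epsilon>) \<tau> = phase_curve ((pi - lag \<epsilon> + 2 * pi * of_int n') / real m)"
    unfolding alpha_limit_def
    by (rule limit_set_eq_phase_curve[OF \<epsilon> \<psi> bot filterlim_arith_progression(2)[OF T]])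
  then show "\<exists>j\<in>{1..m}. alpha_limit (Yfield m k l \<epsilon>) \<tau> = phase_curve (o_plus j \<epsilon>)"
    using o_plus_index by auto
qed


lemma cycles_in_tubes_properties:
  assumes "admissible \<epsilon>"
  shows "limit_cycle (Yfield m k l \<epsilon>) (phase_curve (o_minus i \<epsilon>)) \<and>
    phase_curve (o_minus i \<epsilon>) \<subseteq> {p. infdist p (phase_curve (c_minus i)) < tube_radius} \<and>
    (\<forall>Orb. limit_cycle (Yfield m k l \<epsilon>) Orb \<and> Orb \<subseteq> {p. infdist p (phase_curve (c_minus i)) < tube_radius}
       \<longrightarrow> Orb = phase_curve (o_minus i \<epsilon>)) \<and>
    limit_cycle (Yfield m k l \<epsilon>) (phase_curve (o_plus i \<epsilon>)) \<and>
    phase_curve (o_plus i \<epsilon>) \<subseteq> {p. infdist p (phase_curve (c_plus i)) < tube_radius} \<and>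
    (\<forall>Orb. limit_cycle (Yfield m k l \<epsilon>) Orb \<and> Orb \<subseteq> {p. infdist p (phase_curve (c_plus i)) < tube_radius}
       \<longrightarrow> Orb = phase_curve (o_plus i \<epsilon>)) \<and>
    hyperbolic_attracting (Yfield m k l \<epsilon>) (phase_curve (o_minus i \<epsilon>)) \<and>
    hyperbolic_repelling (Yfield m k l \<epsilon>) (phase_curve (o_plus i \<epsilon>)) \<and>
    torus_knot k l (phase_curve (o_minus i \<epsilon>)) \<and> torus_knot k l (phase_curve (o_plus i \<epsilon>))"
  by (intro conjI allI impI limit_cycle_phase_curve[OF assms] cycle_phase_o_minus cycle_phase_o_plus
      cycles_in_tubes[OF assms] hyperbolic_attracting_o_minus[OF assms]
      hyperbolic_repelling_o_plus[OF assms] torus_knot_phase_curve)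
    (blast dest: limit_cycle_in_tube_unique[OF assms])+

lemma cycle_families_as_eps_to_0:
  "\<not> canard_family (Yfield m k l 0) (\<lambda>\<epsilon>. phase_curve (o_minus i \<epsilon>)) \<and>
   canard_family (Yfield m k l 0) (\<lambda>\<epsilon>. phase_curve (o_plus i \<epsilon>)) \<and>
   hausdorff_tendsto (\<lambda>\<epsilon>. phase_curve (o_minus i \<epsilon>)) (phase_curve (c_minus i)) \<and>
   hausdorff_tendsto (\<lambda>\<epsilon>. phase_curve (o_plus i \<epsilon>)) (phase_curve (c_plus i))"
  using not_canard_o_minus canard_o_plus
  by (blast intro: hausdorff_tendsto_phase_curve o_minus_tendsto o_plus_tendsto)

end

theorem theorem1p1:
  fixes m k l :: nat
  assumes "m \<ge> 1" and "k \<ge> 1" and "coprime k l"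
  shows "\<exists>\<epsilon>0 > 0. \<exists>\<delta> > 0. \<exists>Om Op :: nat \<Rightarrow> real \<Rightarrow> (real \<times> real) set.
    (\<forall>i\<in>{1..m}.
       (\<forall>\<epsilon>\<in>{0<..\<epsilon>0}.
          limit_cycle (Yfield m k l \<epsilon>) (Om i \<epsilon>) \<and>
          Om i \<epsilon> \<subseteq> {p. infdist p (Cminus m k l i) < \<delta>} \<and>
          (\<forall>Orb. limit_cycle (Yfield m k l \<epsilon>) Orb \<and> Orb \<subseteq> {p. infdist p (Cminus m k l i) < \<delta>}
                 \<longrightarrow> Orb = Om i \<epsilon>) \<and>
          limit_cycle (Yfield m k l \<epsilon>) (Op i \<epsilon>) \<and>
          Op i \<epsilon> \<subseteq> {p. infdist p (Cplus m k l i) < \<delta>} \<and>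
          (\<forall>Orb. limit_cycle (Yfield m k l \<epsilon>) Orb \<and> Orb \<subseteq> {p. infdist p (Cplus m k l i) < \<delta>}
                 \<longrightarrow> Orb = Op i \<epsilon>) \<and>
          hyperbolic_attracting (Yfield m k l \<epsilon>) (Om i \<epsilon>) \<and>
          hyperbolic_repelling (Yfield m k l \<epsilon>) (Op i \<epsilon>) \<and>
          torus_knot k l (Om i \<epsilon>) \<and> torus_knot k l (Op i \<epsilon>)) \<and>
       \<not> canard_family (Yfield m k l 0) (Om i) \<and>
       canard_family (Yfield m k l 0) (Op i) \<and>
       hausdorff_tendsto (Om i) (Cminus m k l i) \<and>
       hausdorff_tendsto (Op i) (Cplus m k l i)) \<and>
    (\<forall>\<epsilon>\<in>{0<..\<epsilon>0}. \<forall>\<tau>.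
       (\<forall>i\<in>{1..m}. \<tau> \<notin> Om i \<epsilon> \<and> \<tau> \<notin> Op i \<epsilon>) \<longrightarrow>
       (\<exists>i\<in>{1..m}. alpha_limit (Yfield m k l \<epsilon>) \<tau> = Op i \<epsilon>) \<and>
       (\<exists>j\<in>{1..m}. omega_limit (Yfield m k l \<epsilon>) \<tau> = Om j \<epsilon>))"
proof -
  interpret torus_flow m k l
    using assms by unfold_locales
  obtain \<epsilon>0 where "\<epsilon>0 > 0" and adm: "\<forall>\<epsilon>\<in>{0<..\<epsilon>0}. admissible \<epsilon>"
    using admissible_interval by blast
  show ?thesis
    unfolding Cminus_eq Cplus_eq
    by (intro exI[of _ \<epsilon>0] conjI[OF \<open>\<epsilon>0 > 0\<close>] exI[of _ tube_radius] conjI[OF tube_radius_pos]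
        exI[of _ "\<lambda>i \<epsilon>. phase_curve (o_minus i \<epsilon>)"] exI[of _ "\<lambda>i \<epsilon>. phase_curve (o_plus i \<epsilon>)"]
        cycles_in_tubes_properties cycle_families_as_eps_to_0 limit_sets conjI ballI allI impI)
      (use adm in auto)
qed

end
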